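(* Under the standing assumptions below, for any $\gamma\in\mathbb R^I_+$, $x\in\mathcal X$, $s\in\mathcal S$ and $\phi\in\mathbb R^I$, we have $W(\gamma,x,s,\phi)=D(\gamma,x,s)$ if and only if there exists $\phi_D\in\partial D(\gamma,x,s)$ with $\phi\le\phi_D$ componentwise.
   Context: Setup. Let $\mathcal S$ be a finite set and $(s_t)_{t\ge0}$ a Markov chain on $\mathcal S$ with transition probabilities $\pi(s'|s)>0$ for all $s,s'\in\mathcal S$; for $s^t=(s_0,\dots,s_t)\in\mathcal S^{t+1}$, $\mathbb E_{s^t}$ (or $\mathbb E_{s_t}$) denotes expectation over future shocks given $s^t$. Let $\mathcal A\subset\mathbb R^n$ be a finite set, $\mathcal X\subseteq\mathbb R^m$ a countable set, $\zeta:\mathcal X\times\mathcal A\times\mathcal S\to\mathcal X$, $p:\mathcal X\times\mathcal A\times\mathcal S\to\mathbb R$, $r,g^1,\dots,g^I$ bounded real functions on $\mathcal X\times\mathcal A\times\mathcal S$, $\bar g^i\in\mathbb R$, $\beta\in(0,1)$. A plan is $a=(a(s^t))_{t,s^t}$, $a(s^t)\in\mathcal A$, inducing $x(s^0)=x_0$, $x(s^{t+1})=\zeta(x(s^t),a(s^t),s_t)$. $\tilde{\mathcal A}(x,s)=\{a\in\mathcal A:p(x,a,s)\ge0\}$; $\tilde{\mathcal A}^\infty(x_0)$ is the set of plans with $a(s^t)\in\tilde{\mathcal A}(x(s^t),s_t)$ for all $t,s^t$. A plan is feasible for $(x_0,s_0)$ if it lies in $\tilde{\mathcal A}^\infty(x_0)$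 and $\mathbb E_{s_t}\sum_{n\ge0}\beta^ng^i(x(s^{t+n}),a(s^{t+n}),s_{t+n})\ge\bar g^i$ for all $t,s^t,i$. Standing assumption: for every $(x_0,s_0)$ a feasible plan exists. Pre-action histories: $\mathcal H^t=\mathcal S^{t+1}\times\mathcal A^t$. Ex-ante lottery problem. Give $\tilde{\mathcal A}^\infty(x_0)$ the product topology and let $\mathcal P(\tilde{\mathcal A}^\infty(x_0))$ be the set of Borel probability measures on it; a random plan $a\sim P$ is drawn independently of the shocks. $P$ is feasible for $(x_0,s_0)$ if for all $t\ge0$, all $h^t=(s_0,\tilde a_0,\dots,s_{t-1},\tilde a_{t-1},s_t)\in\mathcal H^t$ and all $i$, $\mathbb E^{a\sim P}_{s^t}\big[\mathbf 1\{(a(s^0),\dots,a(s^{t-1}))=(\tilde a_0,\dots,\tilde a_{t-1})\}(\sum_{n\ge0}\beta^ng^i(x(s^{t+n}),a(s^{t+n}),s_{t+n})-\bar g^i)\big]\ge0$ ($s^t$ the shock history in $h^t$). For $\gamma\in\mathbb R^I$, $V(\gamma,x_0,s_0)$ is the maximum of $\mathbb E^{a\sim P}_{s_0}\sum_t\beta^t(r(x(s^t),a(s^t),s_t)+\sum_i\gamma^ig^i(x(s^t),a(s^t),s_t))$ over feasible $P$ (it exists, and for $\gamma\in\mathbb R^I_+$ it equals the dual value function $D(\gamma,x_0,s_0)=\inf_{\lambda}\sup_{a}L$ of the Lagrangian with nonnegative summable history-dependent multipliers). $\gamma\mapsto V(\gamma,x,s)$ is a finite convex function on $\mathbb R^I$;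 $\partial D(\gamma,x,s)$ denotes its subdifferential at $\gamma$. Promised-value problem: $W(\gamma,x_0,s_0,\phi)$ is the supremum of the same objective over feasible $P$ that additionally satisfy $\mathbb E^{a\sim P}_{s_0}\sum_{t\ge0}\beta^tg^i(x(s^t),a(s^t),s_t)\ge\phi^i$ for all $i$ (equal to $-\infty$ if no such $P$ exists). *)

theory Defs
  imports "HOL-Analysis.Analysis" "HOL-Probability.Probability"
begin

text \<open>Shock histories s^t = (s_0,...,s_t) are nonempty lists; the current shock is the last
element. Transition probabilities: pi s s' is the probability of s' given s.\<close>

fun cexp :: "('s::finite \<Rightarrow> 's \<Rightarrow> real) \<Rightarrow> 's list \<Rightarrow> nat \<Rightarrow> ('s list \<Rightarrow> real) \<Rightarrow> real" where
  "cexp \<pi> h 0 f = f h"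
| "cexp \<pi> h (Suc n) f = (\<Sum>s'\<in>UNIV. \<pi> (last h) s' * cexp \<pi> (h @ [s']) n f)"

text \<open>E_{s^t} sum_n beta^n f(s^{t+n}), written as sum_n beta^n E_{s^t} f(s^{t+n})
  (the integrands are bounded, so expectation and sum commute).\<close>
definition disc :: "real \<Rightarrow> ('s::finite \<Rightarrow> 's \<Rightarrow> real) \<Rightarrow> 's list \<Rightarrow> ('s list \<Rightarrow> real) \<Rightarrow> real" where
  "disc \<beta> \<pi> h f = (\<Sum>n. \<beta> ^ n * cexp \<pi> h n f)"

text \<open>State path: x(s^0) = x0, x(s^{k+1}) = zeta(x(s^k), a(s^k), s_k), where s^k = take (k+1) h.\<close>
primrec xk :: "('x \<Rightarrow> 'a \<Rightarrow> 's \<Rightarrow> 'x) \<Rightarrow> ('s list \<Rightarrow> 'a) \<Rightarrow> 'x \<Rightarrow> 's list \<Rightarrow> nat \<Rightarrow> 'x" where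
  "xk \<zeta> a x0 h 0 = x0"
| "xk \<zeta> a x0 h (Suc k) = \<zeta> (xk \<zeta> a x0 h k) (a (take (Suc k) h)) (h ! k)"

definition xp :: "('x \<Rightarrow> 'a \<Rightarrow> 's \<Rightarrow> 'x) \<Rightarrow> ('s list \<Rightarrow> 'a) \<Rightarrow> 'x \<Rightarrow> 's list \<Rightarrow> 'x" where
  "xp \<zeta> a x0 h = xk \<zeta> a x0 h (length h - 1)"

definition flow :: "('x \<Rightarrow> 'a \<Rightarrow> 's \<Rightarrow> 'x) \<Rightarrow> ('s list \<Rightarrow> 'a) \<Rightarrow> 'x \<Rightarrow> ('x \<Rightarrow> 'a \<Rightarrow> 's \<Rightarrow> real) \<Rightarrow> 's list \<Rightarrow> real" where
  "flow \<zeta> a x0 f h = f (xp \<zeta> a x0 h) (a h) (last h)"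

text \<open>The plan space tilde A^infty(x0). The coordinate at the empty list is a dummy coordinate
  (constrained to lie in A only).\<close>
definition plans :: "('x \<Rightarrow> 'a \<Rightarrow> 's \<Rightarrow> 'x) \<Rightarrow> ('x \<Rightarrow> 'a \<Rightarrow> 's \<Rightarrow> real) \<Rightarrow> 'a set \<Rightarrow> 'x \<Rightarrow> ('s list \<Rightarrow> 'a) set" where
  "plans \<zeta> p A x0 = {a. (\<forall>h. a h \<in> A) \<and> (\<forall>h. h \<noteq> [] \<longrightarrow> p (xp \<zeta> a x0 h) (a h) (last h) \<ge> 0)}"

definition det_feasible ::
  "real \<Rightarrow> ('s::finite \<Rightarrow> 's \<Rightarrow> real) \<Rightarrow> ('x \<Rightarrow> 'a \<Rightarrow> 's \<Rightarrow> 'x) \<Rightarrow> ('x \<Rightarrow> 'a \<Rightarrow> 's \<Rightarrow> real) \<Rightarrow> 'a set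
   \<Rightarrow> ('i \<Rightarrow> 'x \<Rightarrow> 'a \<Rightarrow> 's \<Rightarrow> real) \<Rightarrow> ('i \<Rightarrow> real) \<Rightarrow> 'x \<Rightarrow> 's \<Rightarrow> ('s list \<Rightarrow> 'a) \<Rightarrow> bool" where
  "det_feasible \<beta> \<pi> \<zeta> p A g gbar x0 s0 a \<longleftrightarrow>
     a \<in> plans \<zeta> p A x0 \<and>
     (\<forall>h i. h \<noteq> [] \<longrightarrow> hd h = s0 \<longrightarrow> disc \<beta> \<pi> h (flow \<zeta> a x0 (g i)) \<ge> gbar i)"

text \<open>Feasible lottery P for (x0,s0): a Borel probability measure on the plan space
  (product topology, subspace topology) satisfying the ex-ante constraints for every
  pre-action history h^t = (s_0, a_0, ..., a_{t-1}, s_t).\<close>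
definition lottery_feasible ::
  "real \<Rightarrow> ('s::finite \<Rightarrow> 's \<Rightarrow> real) \<Rightarrow> ('x \<Rightarrow> 'a::topological_space \<Rightarrow> 's \<Rightarrow> 'x) \<Rightarrow> ('x \<Rightarrow> 'a \<Rightarrow> 's \<Rightarrow> real)
   \<Rightarrow> 'a set \<Rightarrow> ('i \<Rightarrow> 'x \<Rightarrow> 'a \<Rightarrow> 's \<Rightarrow> real) \<Rightarrow> ('i \<Rightarrow> real) \<Rightarrow> 'x \<Rightarrow> 's
   \<Rightarrow> ('s list \<Rightarrow> 'a) measure \<Rightarrow> bool" where
  "lottery_feasible \<beta> \<pi> \<zeta> p A g gbar x0 s0 P \<longleftrightarrow>
     prob_space P \<and> sets P = sets (restrict_space borel (plans \<zeta> p A x0)) \<and>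
     (\<forall>h atil i. h \<noteq> [] \<longrightarrow> hd h = s0 \<longrightarrow> length atil = length h - 1 \<longrightarrow> set atil \<subseteq> A \<longrightarrow>
        (\<integral>a. (if (\<forall>k < length h - 1. a (take (Suc k) h) = atil ! k) then 1 else 0)
               * (disc \<beta> \<pi> h (flow \<zeta> a x0 (g i)) - gbar i) \<partial>P) \<ge> 0)"

definition objective ::
  "real \<Rightarrow> ('s::finite \<Rightarrow> 's \<Rightarrow> real) \<Rightarrow> ('x \<Rightarrow> 'a \<Rightarrow> 's \<Rightarrow> 'x) \<Rightarrow> ('x \<Rightarrow> 'a \<Rightarrow> 's \<Rightarrow> real)
   \<Rightarrow> ('i::finite \<Rightarrow> 'x \<Rightarrow> 'a \<Rightarrow> 's \<Rightarrow> real) \<Rightarrow> real^'i \<Rightarrow> 'x \<Rightarrow> 's \<Rightarrow> ('s list \<Rightarrow> 'a) measure \<Rightarrow> real" where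
  "objective \<beta> \<pi> \<zeta> r g \<gamma> x0 s0 P =
     (\<integral>a. disc \<beta> \<pi> [s0] (flow \<zeta> a x0 (\<lambda>x b s. r x b s + (\<Sum>i\<in>UNIV. \<gamma> $ i * g i x b s))) \<partial>P)"

text \<open>V(gamma,x0,s0): value of the ex-ante lottery problem (a maximum; written as a supremum).\<close>
definition Vval ::
  "real \<Rightarrow> ('s::finite \<Rightarrow> 's \<Rightarrow> real) \<Rightarrow> ('x \<Rightarrow> 'a::topological_space \<Rightarrow> 's \<Rightarrow> 'x) \<Rightarrow> ('x \<Rightarrow> 'a \<Rightarrow> 's \<Rightarrow> real)
   \<Rightarrow> 'a set \<Rightarrow> ('x \<Rightarrow> 'a \<Rightarrow> 's \<Rightarrow> real) \<Rightarrow> ('i::finite \<Rightarrow> 'x \<Rightarrow> 'a \<Rightarrow> 's \<Rightarrow> real) \<Rightarrow> ('i \<Rightarrow> real)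
   \<Rightarrow> real^'i \<Rightarrow> 'x \<Rightarrow> 's \<Rightarrow> real" where
  "Vval \<beta> \<pi> \<zeta> p A r g gbar \<gamma> x0 s0 =
     Sup (objective \<beta> \<pi> \<zeta> r g \<gamma> x0 s0 ` {P. lottery_feasible \<beta> \<pi> \<zeta> p A g gbar x0 s0 P})"

text \<open>W(gamma,x0,s0,phi): promised-value problem (supremum in the extended reals, -infinity if empty).\<close>
definition Wval ::
  "real \<Rightarrow> ('s::finite \<Rightarrow> 's \<Rightarrow> real) \<Rightarrow> ('x \<Rightarrow> 'a::topological_space \<Rightarrow> 's \<Rightarrow> 'x) \<Rightarrow> ('x \<Rightarrow> 'a \<Rightarrow> 's \<Rightarrow> real)
   \<Rightarrow> 'a set \<Rightarrow> ('x \<Rightarrow> 'a \<Rightarrow> 's \<Rightarrow> real) \<Rightarrow> ('i::finite \<Rightarrow> 'x \<Rightarrow> 'a \<Rightarrow> 's \<Rightarrow> real) \<Rightarrow> ('i \<Rightarrow> real)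
   \<Rightarrow> real^'i \<Rightarrow> 'x \<Rightarrow> 's \<Rightarrow> real^'i \<Rightarrow> ereal" where
  "Wval \<beta> \<pi> \<zeta> p A r g gbar \<gamma> x0 s0 \<phi> =
     Sup ((\<lambda>P. ereal (objective \<beta> \<pi> \<zeta> r g \<gamma> x0 s0 P)) `
       {P. lottery_feasible \<beta> \<pi> \<zeta> p A g gbar x0 s0 P \<and>
           (\<forall>i. (\<integral>a. disc \<beta> \<pi> [s0] (flow \<zeta> a x0 (g i)) \<partial>P) \<ge> \<phi> $ i)})"

definition subdifferential :: "(real^'i \<Rightarrow> real) \<Rightarrow> real^'i \<Rightarrow> (real^'i) set" where
  "subdifferential f y = {d. \<forall>y'. f y' \<ge> f y + d \<bullet> (y' - y)}"

end

(* Write the objective of a lottery P as R(P) + gamma . G(P), where R is the expected discounted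
   reward and G the vector of expected discounted constraint payoffs: V is then a supremum of
   affine functions of gamma.  Lotteries are sequentially compact for convergence of cylinder
   probabilities (a diagonal subsequence, then the Kolmogorov extension theorem), R, G and the
   ex-ante constraints are continuous for this convergence because discounted sums are uniform
   limits of functions of finitely many coordinates, and mixing two lotteries mixes R and G.
   Hence if W = V the constrained problem has a maximiser Q, and G(Q) >= phi is a subgradient
   of V.  Conversely, the vectors dominated by G(Q) for some optimal Q form a closed convex set;
   if a subgradient phiD lay outside, a separating direction l together with the subgradient
   inequality at gamma + t l and compactness would produce an optimal Q with G(Q) . l >= phiD . l,
   a contradiction.  So some optimal Q has G(Q) >= phiD >= phi, which gives W = V. *)

theory Submission
  imports Defs
begin

lemma xk_cong:
  assumes "\<And>k'. k' < k \<Longrightarrow> a (take (Suc k') h) = b (take (Suc k') h)"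
  shows "xk \<zeta> a x0 h k = xk \<zeta> b x0 h k"
  using assms by (induction k) auto

lemma xk_in:
  assumes "x0 \<in> X" "\<And>y c s. y \<in> X \<Longrightarrow> c \<in> A \<Longrightarrow> \<zeta> y c s \<in> X" "\<And>h. a h \<in> A"
  shows "xk \<zeta> a x0 h k \<in> X"
  using assms by (induction k) auto

lemma xp_in:
  assumes "x0 \<in> X" "\<And>y c s. y \<in> X \<Longrightarrow> c \<in> A \<Longrightarrow> \<zeta> y c s \<in> X" "\<And>h. a h \<in> A"
  shows "xp \<zeta> a x0 h \<in> X"
  unfolding xp_def using xk_in[OF assms] .

lemma xp_cong:
  assumes "\<And>h'. length h' \<le> length h \<Longrightarrow> a h' = b h'"
  shows "xp \<zeta> a x0 h = xp \<zeta> b x0 h"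
  unfolding xp_def by (rule xk_cong) (auto intro!: assms)

lemma flow_cong:
  assumes "\<And>h'. length h' \<le> length h \<Longrightarrow> a h' = b h'"
  shows "flow \<zeta> a x0 f h = flow \<zeta> b x0 f h"
proof -
  have "xp \<zeta> a x0 h = xp \<zeta> b x0 h" by (rule xp_cong) (rule assms)
  then show ?thesis unfolding flow_def using assms[of h] by simp
qed

lemma cexp_cong:
  assumes "\<And>h'. length h' = length h + n \<Longrightarrow> F h' = G h'"
  shows "cexp \<pi> h n F = cexp \<pi> h n G"
  using assms
proof (induction n arbitrary: h)
  case (Suc n)
  then show ?case by (simp add: Suc.IH[of "_ @ [_]"])
qed simp

lemma cexp_abs_le:
  assumes "\<And>s s'. \<pi> s s' \<ge> 0" "\<And>s. (\<Sum>s'\<in>UNIV. \<pi> s s') = 1" "\<And>h'. \<bar>F h'\<bar> \<le> B"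
  shows "\<bar>cexp \<pi> h n F\<bar> \<le> B"
proof (induction n arbitrary: h)
  case 0
  then show ?case using assms(3) by simp
next
  case (Suc n)
  have "\<bar>cexp \<pi> h (Suc n) F\<bar> \<le> (\<Sum>s'\<in>UNIV. \<bar>\<pi> (last h) s' * cexp \<pi> (h @ [s']) n F\<bar>)"
    by (simp add: sum_abs)
  also have "\<dots> = (\<Sum>s'\<in>UNIV. \<pi> (last h) s' * \<bar>cexp \<pi> (h @ [s']) n F\<bar>)"
    by (simp add: abs_mult assms(1))
  also have "\<dots> \<le> (\<Sum>s'\<in>UNIV. \<pi> (last h) s' * B)"
    by (intro sum_mono mult_left_mono Suc.IH assms(1))
  also have "\<dots> = B"
    by (simp add: sum_distrib_right[symmetric] assms(2))
  finally show ?case .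
qed

lemma cexp_add: "cexp \<pi> h n (\<lambda>h'. F h' + G h') = cexp \<pi> h n F + cexp \<pi> h n G"
  by (induction n arbitrary: h) (simp_all add: algebra_simps sum.distrib)

lemma cexp_mult_left: "cexp \<pi> h n (\<lambda>h'. c * F h') = c * cexp \<pi> h n F"
  by (induction n arbitrary: h) (simp_all add: sum_distrib_left algebra_simps)

lemma cexp_sum: "cexp \<pi> h n (\<lambda>h'. \<Sum>i\<in>I. F i h') = (\<Sum>i\<in>I. cexp \<pi> h n (F i))"
  by (induction n arbitrary: h) (simp_all add: sum_distrib_left sum.swap[of _ I])

lemma disc_sums:
  assumes "\<And>s s'. \<pi> s s' \<ge> 0" "\<And>s. (\<Sum>s'\<in>UNIV. \<pi> s s') = 1" "\<And>h'. \<bar>F h'\<bar> \<le> B"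
    and "0 \<le> \<beta>" "\<beta> < 1"
  shows "(\<lambda>n. \<beta> ^ n * cexp \<pi> h n F) sums disc \<beta> \<pi> h F"
proof -
  have "summable (\<lambda>n. \<beta> ^ n * cexp \<pi> h n F)"
  proof (rule summable_comparison_test)
    show "\<exists>N. \<forall>n\<ge>N. norm (\<beta> ^ n * cexp \<pi> h n F) \<le> B * \<beta> ^ n"
      using cexp_abs_le[OF assms(1-3)] assms(4)
      by (auto simp: abs_mult mult.commute[of B] intro!: mult_left_mono)
    show "summable (\<lambda>n. B * \<beta> ^ n)"
      using assms(4,5) by (intro summable_mult summable_geometric) auto
  qed
  then show ?thesis
    unfolding disc_def by (rule summable_sums)
qed

lemma disc_add_sum:
  assumes "\<And>s s'. \<pi> s s' \<ge> 0" "\<And>s. (\<Sum>s'\<in>UNIV. \<pi> s s') = 1" "0 \<le> \<beta>" "\<beta> < 1"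
    and "\<And>h'. \<bar>F h'\<bar> \<le> B" "\<And>i h'. \<bar>G i h'\<bar> \<le> C i"
  shows "disc \<beta> \<pi> h (\<lambda>h'. F h' + (\<Sum>i\<in>I. w i * G i h'))
       = disc \<beta> \<pi> h F + (\<Sum>i\<in>I. w i * disc \<beta> \<pi> h (G i))"
proof -
  have "(\<lambda>n. \<beta> ^ n * cexp \<pi> h n F + (\<Sum>i\<in>I. w i * (\<beta> ^ n * cexp \<pi> h n (G i))))
      sums (disc \<beta> \<pi> h F + (\<Sum>i\<in>I. w i * disc \<beta> \<pi> h (G i)))"
    using assms by (intro sums_add sums_sum sums_mult disc_sums) auto
  moreover have "\<beta> ^ n * cexp \<pi> h n (\<lambda>h'. F h' + (\<Sum>i\<in>I. w i * G i h'))
      = \<beta> ^ n * cexp \<pi> h n F + (\<Sum>i\<in>I. w i * (\<beta> ^ n * cexp \<pi> h n (G i)))" for n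
    by (simp add: cexp_add cexp_sum cexp_mult_left algebra_simps sum_distrib_left)
  ultimately show ?thesis
    unfolding disc_def[of _ _ _ "\<lambda>h'. F h' + _ h'"] by (simp add: sums_iff)
qed

lemma geometric_tail_abs_le:
  fixes c :: "nat \<Rightarrow> real"
  assumes "\<And>n. \<bar>c n\<bar> \<le> B" "0 \<le> \<beta>" "\<beta> < 1"
  shows "\<bar>(\<Sum>n. \<beta> ^ n * c n) - (\<Sum>n<N. \<beta> ^ n * c n)\<bar> \<le> B * \<beta> ^ N / (1 - \<beta>)"
proof -
  have bound: "\<bar>\<beta> ^ (n + N) * c (n + N)\<bar> \<le> B * \<beta> ^ N * \<beta> ^ n" for n
  proof -
    have "\<bar>\<beta> ^ (n + N) * c (n + N)\<bar> \<le> \<beta> ^ (n + N) * B"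
      using assms(1,2) by (simp add: abs_mult mult_left_mono)
    then show ?thesis by (simp add: power_add algebra_simps)
  qed
  have geom: "summable (\<lambda>n. B * \<beta> ^ N * \<beta> ^ n)"
    using assms(2,3) by (intro summable_mult summable_geometric) auto
  have tail: "summable (\<lambda>n. \<bar>\<beta> ^ (n + N) * c (n + N)\<bar>)"
    by (rule summable_comparison_test[OF _ geom]) (use bound in auto)
  then have summable: "summable (\<lambda>n. \<beta> ^ n * c n)"
    using summable_iff_shift[of "\<lambda>n. \<beta> ^ n * c n" N] summable_rabs_cancel[OF tail] by simp
  have "\<bar>(\<Sum>n. \<beta> ^ n * c n) - (\<Sum>n<N. \<beta> ^ n * c n)\<bar> = \<bar>\<Sum>n. \<beta> ^ (n + N) * c (n + N)\<bar>"
    using suminf_minus_initial_segment[OF summable, of N] by simp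
  also have "\<dots> \<le> (\<Sum>n. B * \<beta> ^ N * \<beta> ^ n)"
    using summable_rabs[OF tail] suminf_le[OF bound tail geom] by linarith
  also have "\<dots> = B * \<beta> ^ N / (1 - \<beta>)"
    using assms(2,3) by (simp add: suminf_mult suminf_geometric divide_simps)
  finally show ?thesis .
qed

lemma LIMSEQ_squeeze_inverse_Suc:
  fixes x :: "nat \<Rightarrow> real"
  assumes "\<And>k. c - K / real (Suc k) \<le> x k" "\<And>k. x k \<le> c"
  shows "x \<longlonglongrightarrow> c"
proof (rule tendsto_sandwich[OF _ _ _ tendsto_const])
  show "(\<lambda>k. c - K / real (Suc k)) \<longlonglongrightarrow> c"
    using tendsto_diff[OF tendsto_const LIMSEQ_Suc[OF lim_const_over_n[of K]]] by simp
qed (use assms in auto)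

lemma diagonal_convergent_subseq:
  fixes w :: "nat \<Rightarrow> 'b \<Rightarrow> real"
  assumes "countable T" "\<And>t. t \<in> T \<Longrightarrow> bounded (range (\<lambda>k. w k t))"
  shows "\<exists>r. strict_mono r \<and> (\<forall>t\<in>T. convergent (\<lambda>k. w (r k) t))"
proof -
  define e where "e = from_nat_into T"
  \<comment> \<open>The first disjunct only matters for \<open>T = {}\<close>, where \<open>from_nat_into\<close> is junk.\<close>
  define P where "P n s \<longleftrightarrow> e n \<notin> T \<or> convergent (\<lambda>k. w (s k) (e n))" for n s
  interpret subseqs P
  proof
    fix n and s :: "nat \<Rightarrow> nat"
    assume "strict_mono s"
    show "\<exists>r'. strict_mono r' \<and> P n (s \<circ> r')"
    proof (cases "e n \<in> T")
      case True
      then have "bounded (range (\<lambda>k. w (s k) (e n)))"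
        by (rule bounded_subset[OF assms(2)]) auto
      from bounded_imp_convergent_subsequence[OF this] obtain l r
        where "strict_mono r" "((\<lambda>k. w (s k) (e n)) \<circ> r) \<longlonglongrightarrow> l"
        by blast
      then show ?thesis by (auto simp: P_def convergent_def o_def)
    qed (auto simp: P_def intro: strict_mono_id)
  qed
  have "P n diagseq" for n
  proof -
    have *: "P n (diagseq \<circ> (+) (Suc n))"
      by (rule diagseq_holds) (auto simp: P_def o_def dest: convergent_subseq_convergent)
    show ?thesis
    proof (cases "e n \<in> T")
      case True
      then obtain L where "(\<lambda>k. w (diagseq (k + Suc n)) (e n)) \<longlonglongrightarrow> L"
        using * by (auto simp: P_def o_def add.commute convergent_def)
      then have "(\<lambda>k. w (diagseq k) (e n)) \<longlonglongrightarrow> L"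
        by (rule LIMSEQ_offset)
      then show ?thesis by (auto simp: P_def convergent_def)
    qed (simp add: P_def)
  qed
  moreover have "e (to_nat_on T t) = t" if "t \<in> T" for t
    unfolding e_def using assms(1) that by (rule from_nat_into_to_nat_on)
  ultimately have "\<forall>t\<in>T. convergent (\<lambda>k. w (diagseq k) t)"
    by (metis P_def)
  then show ?thesis using subseq_diagseq by blast
qed

locale lottery_space =
  fixes \<zeta> :: "'x \<Rightarrow> 'a::polish_space \<Rightarrow> 's::finite \<Rightarrow> 'x" and p :: "'x \<Rightarrow> 'a \<Rightarrow> 's \<Rightarrow> real"
    and A :: "'a set" and x0 :: 'x
  assumes finite_actions: "finite A"
begin

abbreviation \<Omega> :: "('s list \<Rightarrow> 'a) set" where
  "\<Omega> \<equiv> plans \<zeta> p A x0"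

definition lotteries :: "('s list \<Rightarrow> 'a) measure set" where
  "lotteries = {P. prob_space P \<and> sets P = sets (restrict_space borel \<Omega>)}"

definition cylinder :: "'s list set \<Rightarrow> ('s list \<Rightarrow> 'a) \<Rightarrow> ('s list \<Rightarrow> 'a) set" where
  "cylinder J \<omega> = {a \<in> \<Omega>. restrict a J = \<omega>}"

definition depends_on :: "'s list set \<Rightarrow> (('s list \<Rightarrow> 'a) \<Rightarrow> real) \<Rightarrow> bool" where
  "depends_on J F \<longleftrightarrow> (\<forall>a\<in>\<Omega>. \<forall>b\<in>\<Omega>. (\<forall>j\<in>J. a j = b j) \<longrightarrow> F a = F b)"

definition representative :: "'s list set \<Rightarrow> ('s list \<Rightarrow> 'a) \<Rightarrow> ('s list \<Rightarrow> 'a)" where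
  "representative J \<omega> = (SOME a. a \<in> cylinder J \<omega>)"

lemma plan_in_actions: "a \<in> \<Omega> \<Longrightarrow> a h \<in> A"
  by (simp add: plans_def)

lemma restrict_plan_in_PiE: "a \<in> \<Omega> \<Longrightarrow> restrict a J \<in> PiE J (\<lambda>_. A)"
  using plan_in_actions by auto

lemma finite_PiE_actions: "finite J \<Longrightarrow> finite (PiE J (\<lambda>_. A))"
  using finite_actions by (simp add: finite_PiE)

lemma lottery_prob_space: "P \<in> lotteries \<Longrightarrow> prob_space P"
  by (simp add: lotteries_def)

lemma space_lottery:
  assumes "P \<in> lotteries"
  shows "space P = \<Omega>"
proof -
  have "sets P = sets (restrict_space borel \<Omega>)"
    using assms by (simp add: lotteries_def)
  then have "space P = space (restrict_space borel \<Omega>)"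
    by (rule sets_eq_imp_space_eq)
  then show ?thesis
    by (simp add: space_restrict_space)
qed

lemma restrict_eq_borel: "{a::'s list \<Rightarrow> 'a. restrict a J = \<omega>} \<in> sets borel"
proof -
  have "continuous_on UNIV (\<lambda>a::'s list \<Rightarrow> 'a. restrict a J)"
  proof (rule continuous_on_coordinatewise_then_product)
    show "continuous_on UNIV (\<lambda>a. restrict a J i)" for i
      by (cases "i \<in> J") (simp_all add: continuous_on_product_coordinates)
  qed
  then show ?thesis
    by (intro borel_closed closed_Collect_eq) auto
qed

lemma cylinder_in_sets:
  assumes "P \<in> lotteries"
  shows "cylinder J \<omega> \<in> sets P"
proof -
  have "{a. restrict a J = \<omega>} \<in> sets borel"
    by (rule restrict_eq_borel)
  then have "\<Omega> \<inter> {a. restrict a J = \<omega>} \<in> sets (restrict_space borel \<Omega>)"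
    unfolding sets_restrict_space by (rule imageI)
  moreover have "\<Omega> \<inter> {a. restrict a J = \<omega>} = cylinder J \<omega>"
    by (auto simp: cylinder_def)
  ultimately show ?thesis
    using assms by (simp add: lotteries_def)
qed

lemma indicator_cylinder:
  "a \<in> \<Omega> \<Longrightarrow> indicator (cylinder J \<omega>) a = (if restrict a J = \<omega> then 1 else (0::real))"
  by (simp add: cylinder_def)

lemma cylinder_eq_empty: "\<omega> \<notin> PiE J (\<lambda>_. A) \<Longrightarrow> cylinder J \<omega> = {}"
  using restrict_plan_in_PiE unfolding cylinder_def by blast

lemma depends_on_representative:
  assumes "depends_on J F" "a \<in> \<Omega>"
  shows "F (representative J (restrict a J)) = F a"
proof -
  define b where "b = representative J (restrict a J)"
  have "a \<in> cylinder J (restrict a J)"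
    using assms(2) by (simp add: cylinder_def)
  then have "b \<in> cylinder J (restrict a J)"
    unfolding b_def representative_def by (rule someI[where P="\<lambda>b. b \<in> cylinder J (restrict a J)"])
  then have "b \<in> \<Omega>" "restrict b J = restrict a J"
    by (simp_all add: cylinder_def)
  moreover from this(2) have "\<forall>j\<in>J. b j = a j"
    by (metis restrict_apply')
  ultimately show ?thesis
    using assms unfolding b_def depends_on_def by blast
qed

lemma depends_on_sum_cylinders:
  assumes "finite J" "depends_on J F" "a \<in> \<Omega>"
  shows "F a = (\<Sum>\<omega>\<in>PiE J (\<lambda>_. A). F (representative J \<omega>) * indicator (cylinder J \<omega>) a)"
proof -
  have "(\<Sum>\<omega>\<in>PiE J (\<lambda>_. A). F (representative J \<omega>) * indicator (cylinder J \<omega>) a)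
      = (\<Sum>\<omega>\<in>PiE J (\<lambda>_. A). if restrict a J = \<omega> then F (representative J \<omega>) else 0)"
    by (intro sum.cong) (simp_all add: indicator_cylinder[OF assms(3)])
  also have "\<dots> = F (representative J (restrict a J))"
    by (subst sum.delta'[OF finite_PiE_actions[OF assms(1)]]) (use plan_in_actions[OF assms(3)] in auto)
  finally show ?thesis
    using depends_on_representative[OF assms(2,3)] by simp
qed

lemma depends_on_bounded:
  assumes "finite J" "depends_on J F"
  shows "\<exists>B. \<forall>a\<in>\<Omega>. \<bar>F a\<bar> \<le> B"
proof (intro exI ballI)
  fix a assume a: "a \<in> \<Omega>"
  have "\<bar>F (representative J (restrict a J))\<bar> \<le> (\<Sum>\<omega>\<in>PiE J (\<lambda>_. A). \<bar>F (representative J \<omega>)\<bar>)"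
    using finite_PiE_actions[OF assms(1)] restrict_plan_in_PiE[OF a]
    by (intro member_le_sum[where f="\<lambda>\<omega>. \<bar>F (representative J \<omega>)\<bar>"]) simp_all
  then show "\<bar>F a\<bar> \<le> (\<Sum>\<omega>\<in>PiE J (\<lambda>_. A). \<bar>F (representative J \<omega>)\<bar>)"
    by (simp add: depends_on_representative[OF assms(2) a])
qed

lemma depends_on_measurable:
  assumes "finite J" "depends_on J F" "P \<in> lotteries"
  shows "F \<in> borel_measurable P"
proof -
  have "(\<lambda>a. \<Sum>\<omega>\<in>PiE J (\<lambda>_. A). F (representative J \<omega>) * indicator (cylinder J \<omega>) a)
      \<in> borel_measurable P"
    using cylinder_in_sets[OF assms(3)] by measurable
  then show ?thesis
    by (rule measurable_cong[THEN iffD1, rotated])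
       (simp add: depends_on_sum_cylinders[OF assms(1,2)] space_lottery[OF assms(3)])
qed

lemma depends_on_integral:
  assumes "finite J" "depends_on J F" "P \<in> lotteries"
  shows "integral\<^sup>L P F = (\<Sum>\<omega>\<in>PiE J (\<lambda>_. A). F (representative J \<omega>) * measure P (cylinder J \<omega>))"
proof -
  interpret prob_space P
    using assms(3) by (rule lottery_prob_space)
  have "integral\<^sup>L P F
      = integral\<^sup>L P (\<lambda>a. \<Sum>\<omega>\<in>PiE J (\<lambda>_. A). F (representative J \<omega>) * indicator (cylinder J \<omega>) a)"
    using depends_on_sum_cylinders[OF assms(1,2)] space_lottery[OF assms(3)]
    by (intro Bochner_Integration.integral_cong) auto
  also have "\<dots> = (\<Sum>\<omega>\<in>PiE J (\<lambda>_. A). F (representative J \<omega>) * measure P (cylinder J \<omega>))"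
    using cylinder_in_sets[OF assms(3)]
    by (subst Bochner_Integration.integral_sum) (auto simp: less_top[symmetric])
  finally show ?thesis .
qed

lemma depends_on_mono: "J \<subseteq> J' \<Longrightarrow> depends_on J F \<Longrightarrow> depends_on J' F"
  unfolding depends_on_def by blast

lemma depends_on_const: "depends_on J (\<lambda>a. c)"
  unfolding depends_on_def by simp

lemma depends_on_add: "depends_on J F \<Longrightarrow> depends_on J G \<Longrightarrow> depends_on J (\<lambda>a. F a + G a)"
  unfolding depends_on_def by metis

lemma depends_on_mult: "depends_on J F \<Longrightarrow> depends_on J G \<Longrightarrow> depends_on J (\<lambda>a. F a * G a)"
  unfolding depends_on_def by metis

lemma depends_on_sum:
  "(\<And>i. i \<in> I \<Longrightarrow> depends_on J (F i)) \<Longrightarrow> depends_on J (\<lambda>a. \<Sum>i\<in>I. F i a)"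
  unfolding depends_on_def by (metis (no_types, lifting) sum.cong)

text \<open>On the compact plan space these are the continuous functions; their integrals are
  continuous along convergence of cylinder probabilities.\<close>

definition finitely_approximable :: "(('s list \<Rightarrow> 'a) \<Rightarrow> real) \<Rightarrow> bool" where
  "finitely_approximable F \<longleftrightarrow> (\<exists>B. \<forall>a\<in>\<Omega>. \<bar>F a\<bar> \<le> B) \<and>
     (\<forall>e>0. \<exists>J G. finite J \<and> depends_on J G \<and> (\<forall>a\<in>\<Omega>. \<bar>F a - G a\<bar> \<le> e))"

lemma finitely_approximable_bounded:
  "finitely_approximable F \<Longrightarrow> \<exists>B\<ge>0. \<forall>a\<in>\<Omega>. \<bar>F a\<bar> \<le> B"
proof -
  assume "finitely_approximable F"
  then obtain B where "\<forall>a\<in>\<Omega>. \<bar>F a\<bar> \<le> B"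
    unfolding finitely_approximable_def by blast
  then show ?thesis
    by (intro exI[of _ "max B 0"]) auto
qed

lemma finitely_approximable_approx:
  "finitely_approximable F \<Longrightarrow> e > 0 \<Longrightarrow> \<exists>J G. finite J \<and> depends_on J G \<and> (\<forall>a\<in>\<Omega>. \<bar>F a - G a\<bar> \<le> e)"
  unfolding finitely_approximable_def by blast

lemma depends_on_finitely_approximable:
  assumes "finite J" "depends_on J F"
  shows "finitely_approximable F"
  unfolding finitely_approximable_def
proof (intro conjI allI impI)
  show "\<exists>B. \<forall>a\<in>\<Omega>. \<bar>F a\<bar> \<le> B"
    using assms by (rule depends_on_bounded)
  show "\<exists>J G. finite J \<and> depends_on J G \<and> (\<forall>a\<in>\<Omega>. \<bar>F a - G a\<bar> \<le> e)" if "e > 0" for e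
    using assms that by (intro exI[of _ J] exI[of _ F]) simp
qed

lemma finitely_approximable_const: "finitely_approximable (\<lambda>a. c)"
  by (rule depends_on_finitely_approximable[of "{}"]) (simp_all add: depends_on_const)

lemma finitely_approximable_add:
  assumes F: "finitely_approximable F" and G: "finitely_approximable G"
  shows "finitely_approximable (\<lambda>a. F a + G a)"
  unfolding finitely_approximable_def
proof (intro conjI allI impI)
  obtain BF BG where "\<forall>a\<in>\<Omega>. \<bar>F a\<bar> \<le> BF" "\<forall>a\<in>\<Omega>. \<bar>G a\<bar> \<le> BG"
    using finitely_approximable_bounded[OF F] finitely_approximable_bounded[OF G] by blast
  then show "\<exists>B. \<forall>a\<in>\<Omega>. \<bar>F a + G a\<bar> \<le> B"
    by (intro exI[of _ "BF + BG"]) (auto intro: order.trans[OF abs_triangle_ineq] add_mono)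
  fix e :: real
  assume "e > 0"
  then have "e / 2 > 0"
    by simp
  obtain J1 F' where J1: "finite J1" "depends_on J1 F'" and F': "\<forall>a\<in>\<Omega>. \<bar>F a - F' a\<bar> \<le> e / 2"
    using finitely_approximable_approx[OF F \<open>e / 2 > 0\<close>] by blast
  obtain J2 G' where J2: "finite J2" "depends_on J2 G'" and G': "\<forall>a\<in>\<Omega>. \<bar>G a - G' a\<bar> \<le> e / 2"
    using finitely_approximable_approx[OF G \<open>e / 2 > 0\<close>] by blast
  have "depends_on (J1 \<union> J2) (\<lambda>a. F' a + G' a)"
    using J1 J2 by (intro depends_on_add depends_on_mono[OF _ J1(2)] depends_on_mono[OF _ J2(2)]) auto
  moreover have "\<forall>a\<in>\<Omega>. \<bar>F a + G a - (F' a + G' a)\<bar> \<le> e"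
  proof
    fix a
    assume "a \<in> \<Omega>"
    then have "\<bar>F a - F' a\<bar> \<le> e / 2" "\<bar>G a - G' a\<bar> \<le> e / 2"
      using F' G' by blast+
    then show "\<bar>F a + G a - (F' a + G' a)\<bar> \<le> e"
      by linarith
  qed
  ultimately show "\<exists>J H. finite J \<and> depends_on J H \<and> (\<forall>a\<in>\<Omega>. \<bar>F a + G a - H a\<bar> \<le> e)"
    using J1 J2 by (intro exI[of _ "J1 \<union> J2"] exI[of _ "\<lambda>a. F' a + G' a"]) simp
qed

lemma finitely_approximable_mult:
  assumes F: "finitely_approximable F" and G: "finitely_approximable G"
  shows "finitely_approximable (\<lambda>a. F a * G a)"
  unfolding finitely_approximable_def
proof (intro conjI allI impI)
  obtain BF BG where BF: "BF \<ge> 0" "\<forall>a\<in>\<Omega>. \<bar>F a\<bar> \<le> BF"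
    and BG: "BG \<ge> 0" "\<forall>a\<in>\<Omega>. \<bar>G a\<bar> \<le> BG"
    using finitely_approximable_bounded[OF F] finitely_approximable_bounded[OF G] by blast
  show "\<exists>B. \<forall>a\<in>\<Omega>. \<bar>F a * G a\<bar> \<le> B"
    using BF BG by (intro exI[of _ "BF * BG"]) (auto simp: abs_mult intro: mult_mono)
  fix e :: real
  assume "e > 0"
  define d where "d = min 1 (e / (BF + BG + 1))"
  have "BF + BG + 1 > 0" "d \<le> e / (BF + BG + 1)"
    using BF(1) BG(1) by (simp_all add: d_def)
  then have d: "d > 0" "d \<le> 1" "(BF + BG + 1) * d \<le> e"
    using \<open>e > 0\<close> by (simp_all add: pos_le_divide_eq mult.commute) (simp_all add: d_def)
  obtain J1 F' where J1: "finite J1" "depends_on J1 F'" and F': "\<forall>a\<in>\<Omega>. \<bar>F a - F' a\<bar> \<le> d"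
    using finitely_approximable_approx[OF F d(1)] by blast
  obtain J2 G' where J2: "finite J2" "depends_on J2 G'" and G': "\<forall>a\<in>\<Omega>. \<bar>G a - G' a\<bar> \<le> d"
    using finitely_approximable_approx[OF G d(1)] by blast
  have "depends_on (J1 \<union> J2) (\<lambda>a. F' a * G' a)"
    using J1 J2 by (intro depends_on_mult depends_on_mono[OF _ J1(2)] depends_on_mono[OF _ J2(2)]) auto
  moreover have "\<bar>F a * G a - F' a * G' a\<bar> \<le> e" if "a \<in> \<Omega>" for a
  proof -
    have a: "\<bar>F a\<bar> \<le> BF" "\<bar>G a\<bar> \<le> BG" "\<bar>F a - F' a\<bar> \<le> d" "\<bar>G a - G' a\<bar> \<le> d"
      using BF(2) BG(2) F' G' that by blast+
    then have "\<bar>G' a\<bar> \<le> BG + 1"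
      using d(2) by linarith
    have "F a * G a - F' a * G' a = F a * (G a - G' a) + G' a * (F a - F' a)"
      by (simp add: algebra_simps)
    also have "\<bar>\<dots>\<bar> \<le> \<bar>F a\<bar> * \<bar>G a - G' a\<bar> + \<bar>G' a\<bar> * \<bar>F a - F' a\<bar>"
      by (metis abs_mult abs_triangle_ineq)
    also have "\<dots> \<le> BF * d + (BG + 1) * d"
      using BF(1) BG(1) by (intro add_mono mult_mono a \<open>\<bar>G' a\<bar> \<le> BG + 1\<close>) simp_all
    also have "\<dots> \<le> e"
      using d(3) by (simp add: algebra_simps)
    finally show ?thesis .
  qed
  ultimately show "\<exists>J H. finite J \<and> depends_on J H \<and> (\<forall>a\<in>\<Omega>. \<bar>F a * G a - H a\<bar> \<le> e)"
    using J1 J2 by (intro exI[of _ "J1 \<union> J2"] exI[of _ "\<lambda>a. F' a * G' a"]) simp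
qed

lemma finitely_approximable_scale: "finitely_approximable F \<Longrightarrow> finitely_approximable (\<lambda>a. c * F a)"
  by (rule finitely_approximable_mult[OF finitely_approximable_const])

lemma finitely_approximable_diff:
  "finitely_approximable F \<Longrightarrow> finitely_approximable G \<Longrightarrow> finitely_approximable (\<lambda>a. F a - G a)"
  using finitely_approximable_add[of F "\<lambda>a. (-1) * G a"] finitely_approximable_scale[of G "-1"]
  by simp

lemma finitely_approximable_suminf:
  assumes "0 \<le> \<beta>" "\<beta> < 1" "\<And>n. finite (J n)" "\<And>n. depends_on (J n) (c n)"
    and "\<And>n a. a \<in> \<Omega> \<Longrightarrow> \<bar>c n a\<bar> \<le> B"
  shows "finitely_approximable (\<lambda>a. \<Sum>n. \<beta> ^ n * c n a)"
  unfolding finitely_approximable_def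
proof (intro conjI allI impI)
  have tail: "\<bar>(\<Sum>n. \<beta> ^ n * c n a) - (\<Sum>n<N. \<beta> ^ n * c n a)\<bar> \<le> B * \<beta> ^ N / (1 - \<beta>)"
    if "a \<in> \<Omega>" for a N
    using assms(5)[OF that] assms(1,2) by (rule geometric_tail_abs_le)
  then show "\<exists>B'. \<forall>a\<in>\<Omega>. \<bar>\<Sum>n. \<beta> ^ n * c n a\<bar> \<le> B'"
    by (intro exI[of _ "B / (1 - \<beta>)"]) (use tail[of _ 0] in simp)
  fix e :: real
  assume "e > 0"
  have "(\<lambda>N. B * \<beta> ^ N / (1 - \<beta>)) \<longlonglongrightarrow> B * 0 / (1 - \<beta>)"
    using assms(1,2) by (intro tendsto_intros LIMSEQ_power_zero) auto
  then have "eventually (\<lambda>N. B * \<beta> ^ N / (1 - \<beta>) < e) sequentially"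
    using \<open>e > 0\<close> by (intro order_tendstoD(2)) simp_all
  then obtain N where "B * \<beta> ^ N / (1 - \<beta>) < e"
    unfolding eventually_sequentially by auto
  then have "\<bar>(\<Sum>n. \<beta> ^ n * c n a) - (\<Sum>n<N. \<beta> ^ n * c n a)\<bar> \<le> e" if "a \<in> \<Omega>" for a
    using tail[OF that, of N] by linarith
  moreover have "depends_on (\<Union>n<N. J n) (\<lambda>a. \<Sum>n<N. \<beta> ^ n * c n a)"
    by (intro depends_on_sum depends_on_mult depends_on_const depends_on_mono[OF _ assms(4)]) auto
  moreover have "finite (\<Union>n<N. J n)"
    using assms(3) by simp
  ultimately show "\<exists>J G. finite J \<and> depends_on J G \<and> (\<forall>a\<in>\<Omega>. \<bar>(\<Sum>n. \<beta> ^ n * c n a) - G a\<bar> \<le> e)"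
    by blast
qed

lemma finitely_approximable_measurable:
  assumes "finitely_approximable F" "P \<in> lotteries"
  shows "F \<in> borel_measurable P"
proof -
  have "\<forall>n. \<exists>J G. finite J \<and> depends_on J G \<and> (\<forall>a\<in>\<Omega>. \<bar>F a - G a\<bar> \<le> inverse (real (Suc n)))"
    using assms(1) unfolding finitely_approximable_def by simp
  then obtain J G where JG: "\<And>n. finite (J n)" "\<And>n. depends_on (J n) (G n)"
    and approx: "\<And>n a. a \<in> \<Omega> \<Longrightarrow> \<bar>F a - G n a\<bar> \<le> inverse (real (Suc n))"
    by metis
  show ?thesis
  proof (rule borel_measurable_LIMSEQ_real)
    show "G n \<in> borel_measurable P" for n
      using JG assms(2) by (rule depends_on_measurable)
    fix a
    assume "a \<in> space P"
    then have "a \<in> \<Omega>"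
      using space_lottery[OF assms(2)] by simp
    have "(\<lambda>n. G n a - F a) \<longlonglongrightarrow> 0"
      by (rule Lim_null_comparison[OF _ LIMSEQ_inverse_real_of_nat])
         (use approx[OF \<open>a \<in> \<Omega>\<close>] in \<open>simp add: abs_minus_commute\<close>)
    from tendsto_add[OF this tendsto_const[of "F a"]]
    show "(\<lambda>n. G n a) \<longlonglongrightarrow> F a"
      by simp
  qed
qed

lemma finitely_approximable_integrable:
  assumes "finitely_approximable F" "P \<in> lotteries"
  shows "integrable P F"
proof -
  interpret prob_space P
    using assms(2) by (rule lottery_prob_space)
  obtain B where "\<forall>a\<in>\<Omega>. \<bar>F a\<bar> \<le> B"
    using finitely_approximable_bounded[OF assms(1)] by blast
  then show ?thesis
    using finitely_approximable_measurable[OF assms] space_lottery[OF assms(2)]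
    by (intro integrable_const_bound[where B=B]) auto
qed

lemma lottery_integral_abs_diff_le:
  fixes F G :: "('s list \<Rightarrow> 'a) \<Rightarrow> real"
  assumes "P \<in> lotteries" "integrable P F" "integrable P G" "\<And>a. a \<in> \<Omega> \<Longrightarrow> \<bar>F a - G a\<bar> \<le> e"
  shows "\<bar>integral\<^sup>L P F - integral\<^sup>L P G\<bar> \<le> e"
proof -
  interpret prob_space P
    using assms(1) by (rule lottery_prob_space)
  have "\<bar>integral\<^sup>L P F - integral\<^sup>L P G\<bar> \<le> integral\<^sup>L P (\<lambda>a. \<bar>F a - G a\<bar>)"
    using assms(2,3) integral_abs_bound[of P "\<lambda>a. F a - G a"] by simp
  also have "\<dots> \<le> integral\<^sup>L P (\<lambda>a. e)"
    using assms space_lottery[OF assms(1)] by (intro integral_mono) auto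
  finally show ?thesis
    by (simp add: prob_space)
qed

lemma finitely_approximable_integral_bounded:
  assumes "finitely_approximable F"
  shows "\<exists>B. \<forall>P\<in>lotteries. \<bar>integral\<^sup>L P F\<bar> \<le> B"
proof -
  obtain B where "\<forall>a\<in>\<Omega>. \<bar>F a\<bar> \<le> B"
    using finitely_approximable_bounded[OF assms] by blast
  then have "\<bar>integral\<^sup>L P F - integral\<^sup>L P (\<lambda>a. 0)\<bar> \<le> B" if "P \<in> lotteries" for P
    using that finitely_approximable_integrable[OF assms that]
    by (intro lottery_integral_abs_diff_le) auto
  then show ?thesis
    by auto
qed

definition cylinder_tendsto :: "(nat \<Rightarrow> ('s list \<Rightarrow> 'a) measure) \<Rightarrow> ('s list \<Rightarrow> 'a) measure \<Rightarrow> bool" where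
  "cylinder_tendsto Pk P \<longleftrightarrow>
     (\<forall>J \<omega>. finite J \<longrightarrow> (\<lambda>k. measure (Pk k) (cylinder J \<omega>)) \<longlonglongrightarrow> measure P (cylinder J \<omega>))"

lemma integral_tendsto_depends_on:
  assumes "\<And>k. Pk k \<in> lotteries" "P \<in> lotteries" "cylinder_tendsto Pk P"
    and "finite J" "depends_on J F"
  shows "(\<lambda>k. integral\<^sup>L (Pk k) F) \<longlonglongrightarrow> integral\<^sup>L P F"
  unfolding depends_on_integral[OF assms(4,5) assms(1)] depends_on_integral[OF assms(4,5,2)]
  using assms(3,4) unfolding cylinder_tendsto_def by (intro tendsto_intros) auto

lemma integral_tendsto_finitely_approximable:
  assumes Pk: "\<And>k. Pk k \<in> lotteries" and P: "P \<in> lotteries" and lim: "cylinder_tendsto Pk P"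
    and F: "finitely_approximable F"
  shows "(\<lambda>k. integral\<^sup>L (Pk k) F) \<longlonglongrightarrow> integral\<^sup>L P F"
proof (rule LIMSEQ_I)
  fix r :: real
  assume "r > 0"
  then have "r / 4 > 0"
    by simp
  obtain J G where J: "finite J" "depends_on J G" and G: "\<forall>a\<in>\<Omega>. \<bar>F a - G a\<bar> \<le> r / 4"
    using finitely_approximable_approx[OF F \<open>r / 4 > 0\<close>] by blast
  have close: "\<bar>integral\<^sup>L Q F - integral\<^sup>L Q G\<bar> \<le> r / 4" if "Q \<in> lotteries" for Q
    using that finitely_approximable_integrable[OF F that]
      finitely_approximable_integrable[OF depends_on_finitely_approximable[OF J] that]
    by (rule lottery_integral_abs_diff_le) (use G in blast)
  from LIMSEQ_D[OF integral_tendsto_depends_on[OF Pk P lim J] \<open>r / 4 > 0\<close>]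
  obtain N where N: "\<forall>k\<ge>N. \<bar>integral\<^sup>L (Pk k) G - integral\<^sup>L P G\<bar> < r / 4"
    by auto
  have "\<bar>integral\<^sup>L (Pk k) F - integral\<^sup>L P F\<bar> < r" if "k \<ge> N" for k
  proof -
    have "\<bar>integral\<^sup>L (Pk k) G - integral\<^sup>L P G\<bar> < r / 4"
      using N that by blast
    then show ?thesis
      using close[OF Pk, of k] close[OF P] by linarith
  qed
  then show "\<exists>N. \<forall>k\<ge>N. norm (integral\<^sup>L (Pk k) F - integral\<^sup>L P F) < r"
    by auto
qed

lemma lottery_mixture:
  assumes P1: "P1 \<in> lotteries" and P2: "P2 \<in> lotteries" and t: "0 \<le> t" "t \<le> 1"
  shows "\<exists>P\<in>lotteries. \<forall>F. finitely_approximable F \<longrightarrow>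
           integral\<^sup>L P F = t * integral\<^sup>L P1 F + (1 - t) * integral\<^sup>L P2 F"
proof -
  define B where "B = measure_pmf (bernoulli_pmf t)"
  define N where "N b = (if b then P1 else P2)" for b
  interpret B: prob_space B
    by (simp add: B_def prob_space_measure_pmf)
  have sets_N: "sets (N b) = sets P1" and prob_N: "prob_space (N b)" for b
    using P1 P2 by (simp_all add: N_def lotteries_def)
  have N: "N \<in> measurable B (subprob_algebra P1)"
    unfolding B_def measurable_pmf_measure1 space_subprob_algebra
    using sets_N prob_N prob_space_imp_subprob_space by auto
  have "sets (bind B N) = sets P1"
    by (rule sets_bind[OF sets_N]) (simp add: B_def)
  moreover have "prob_space (bind B N)"
    using prob_N by (intro B.prob_space_bind[OF _ N]) simp
  ultimately have "bind B N \<in> lotteries"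
    using P1 by (simp add: lotteries_def)
  moreover have "integral\<^sup>L (bind B N) F = t * integral\<^sup>L P1 F + (1 - t) * integral\<^sup>L P2 F"
    if F: "finitely_approximable F" for F
  proof -
    obtain C where "\<forall>a\<in>\<Omega>. \<bar>F a\<bar> \<le> C"
      using finitely_approximable_bounded[OF F] by blast
    then have "integral\<^sup>L (bind B N) F = (\<integral>b. integral\<^sup>L (N b) F \<partial>B)"
      using finitely_approximable_measurable[OF F P1] space_lottery[OF P1] prob_N
      by (intro integral_bind[OF _ _ N]) (auto simp: B.finite_measure_axioms prob_space.emeasure_space_1)
    also have "\<dots> = t * integral\<^sup>L P1 F + (1 - t) * integral\<^sup>L P2 F"
      unfolding B_def using t by (simp add: integral_bernoulli_pmf N_def algebra_simps)
    finally show ?thesis .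
  qed
  ultimately show ?thesis
    by blast
qed

lemma return_lottery: "a \<in> \<Omega> \<Longrightarrow> return (restrict_space borel \<Omega>) a \<in> lotteries"
  by (auto simp: lotteries_def space_restrict_space intro!: prob_space_return)

lemma measure_Union_cylinders:
  assumes "P \<in> lotteries" "finite S"
  shows "measure P (\<Union>\<omega>\<in>S. cylinder J \<omega>) = (\<Sum>\<omega>\<in>S. measure P (cylinder J \<omega>))"
proof -
  interpret prob_space P
    using assms(1) by (rule lottery_prob_space)
  have "disjoint_family_on (cylinder J) S"
    unfolding disjoint_family_on_def cylinder_def by auto
  then show ?thesis
    using assms(2) cylinder_in_sets[OF assms(1)] by (intro finite_measure_finite_Union) auto
qed

lemma sum_measure_cylinders:
  assumes "P \<in> lotteries" "finite J"
  shows "(\<Sum>\<omega>\<in>PiE J (\<lambda>_. A). measure P (cylinder J \<omega>)) = 1"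
proof -
  interpret prob_space P
    using assms(1) by (rule lottery_prob_space)
  have "(\<Union>\<omega>\<in>PiE J (\<lambda>_. A). cylinder J \<omega>) = \<Omega>"
    using restrict_plan_in_PiE unfolding cylinder_def by blast
  then show ?thesis
    using measure_Union_cylinders[OF assms(1) finite_PiE_actions[OF assms(2)], of J]
      space_lottery[OF assms(1)] prob_space by simp
qed

lemma cylinder_refine:
  assumes "J \<subseteq> H"
  shows "cylinder J \<omega> = (\<Union>\<omega>'\<in>{\<omega>'\<in>PiE H (\<lambda>_. A). restrict \<omega>' J = \<omega>}. cylinder H \<omega>')"
proof -
  have restrict_restrict_H: "restrict (restrict a H) J = restrict a J" for a :: "'s list \<Rightarrow> 'a"
    using assms by (simp add: Int_absorb1)
  show ?thesis
  proof (intro equalityI subsetI)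
    fix a
    assume "a \<in> cylinder J \<omega>"
    then show "a \<in> (\<Union>\<omega>'\<in>{\<omega>'\<in>PiE H (\<lambda>_. A). restrict \<omega>' J = \<omega>}. cylinder H \<omega>')"
      using restrict_plan_in_PiE[of a H] restrict_restrict_H[of a] by (auto simp: cylinder_def)
  next
    fix a
    assume "a \<in> (\<Union>\<omega>'\<in>{\<omega>'\<in>PiE H (\<lambda>_. A). restrict \<omega>' J = \<omega>}. cylinder H \<omega>')"
    then show "a \<in> cylinder J \<omega>"
      using restrict_restrict_H[of a] by (auto simp: cylinder_def)
  qed
qed

lemma measure_cylinder_refine:
  assumes "P \<in> lotteries" "finite H" "J \<subseteq> H"
  shows "measure P (cylinder J \<omega>)
       = (\<Sum>\<omega>'\<in>{\<omega>'\<in>PiE H (\<lambda>_. A). restrict \<omega>' J = \<omega>}. measure P (cylinder H \<omega>'))"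
  unfolding cylinder_refine[OF assms(3), of \<omega>]
  by (rule measure_Union_cylinders[OF assms(1)]) (simp add: finite_PiE_actions[OF assms(2)])

definition histories_upto :: "nat \<Rightarrow> 's list set" where
  "histories_upto N = {h. length h \<le> N}"

lemma finite_histories_upto: "finite (histories_upto N)"
  using finite_lists_length_le[of "UNIV :: 's set" N] by (simp add: histories_upto_def)

definition truncated_plans :: "nat \<Rightarrow> ('s list \<Rightarrow> 'a) set" where
  "truncated_plans N = {\<omega> \<in> PiE (histories_upto N) (\<lambda>_. A).
     \<forall>h\<in>histories_upto N. h \<noteq> [] \<longrightarrow> p (xp \<zeta> \<omega> x0 h) (\<omega> h) (last h) \<ge> 0}"

lemma xp_restrict_histories_upto:
  "h \<in> histories_upto N \<Longrightarrow> xp \<zeta> (restrict a (histories_upto N)) x0 h = xp \<zeta> a x0 h"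
  by (rule xp_cong) (auto simp: histories_upto_def)

lemma plans_iff_truncations: "a \<in> \<Omega> \<longleftrightarrow> (\<forall>N. restrict a (histories_upto N) \<in> truncated_plans N)"
proof
  assume "a \<in> \<Omega>"
  then show "\<forall>N. restrict a (histories_upto N) \<in> truncated_plans N"
    using restrict_plan_in_PiE xp_restrict_histories_upto by (auto simp: truncated_plans_def plans_def)
next
  assume trunc: "\<forall>N. restrict a (histories_upto N) \<in> truncated_plans N"
  have h: "h \<in> histories_upto (length h)" for h :: "'s list"
    by (simp add: histories_upto_def)
  have "a h \<in> A \<and> (h \<noteq> [] \<longrightarrow> p (xp \<zeta> a x0 h) (a h) (last h) \<ge> 0)" for h
    using trunc[rule_format, of "length h"] h xp_restrict_histories_upto[OF h, of a]
    by (auto simp: truncated_plans_def)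
  then show "a \<in> \<Omega>"
    by (simp add: plans_def)
qed

lemma finite_truncated_plans: "finite (truncated_plans N)"
  using finite_PiE_actions[OF finite_histories_upto]
  by (rule finite_subset[rotated]) (auto simp: truncated_plans_def)

end

lemma finite_set_in_sets_PiM:
  assumes "finite J" "finite S" "S \<subseteq> PiE J (\<lambda>_. UNIV)"
  shows "S \<in> sets (PiM J (\<lambda>_. borel :: ('b::t1_space) measure))"
proof -
  have "PiE J (\<lambda>j. {\<omega> j}) = {\<omega>}" if "\<omega> \<in> S" for \<omega>
    using assms(3) that by (intro PiE_singleton) (auto simp: PiE_def)
  then have "S = (\<Union>\<omega>\<in>S. PiE J (\<lambda>j. {\<omega> j}))"
    by auto
  also have "\<dots> \<in> sets (PiM J (\<lambda>_. borel))"
    by (intro sets.finite_UN assms(2) sets_PiM_I_finite assms(1) borel_closed closed_singleton)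
  finally show ?thesis .
qed

text \<open>Limits of the cylinder probabilities of a sequence of lotteries form a consistent family
  of finite-dimensional distributions; the Kolmogorov extension theorem turns it into a lottery.
  Vanishing on empty cylinders is what makes the extension concentrate on the plan space.\<close>

locale cylinder_weights = lottery_space \<zeta> p A x0
  for \<zeta> :: "'x \<Rightarrow> 'a::polish_space \<Rightarrow> 's::finite \<Rightarrow> 'x" and p A x0 +
  fixes W :: "'s list set \<Rightarrow> ('s list \<Rightarrow> 'a) \<Rightarrow> real"
  assumes weights_nonneg: "\<And>J \<omega>. finite J \<Longrightarrow> \<omega> \<in> PiE J (\<lambda>_. A) \<Longrightarrow> W J \<omega> \<ge> 0"
    and weights_sum: "\<And>J. finite J \<Longrightarrow> (\<Sum>\<omega>\<in>PiE J (\<lambda>_. A). W J \<omega>) = 1"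
    and weights_consistent: "\<And>J H \<omega>. finite H \<Longrightarrow> J \<subseteq> H \<Longrightarrow> \<omega> \<in> PiE J (\<lambda>_. A) \<Longrightarrow>
           W J \<omega> = (\<Sum>\<omega>'\<in>{\<omega>'\<in>PiE H (\<lambda>_. A). restrict \<omega>' J = \<omega>}. W H \<omega>')"
    and weights_empty_cylinder: "\<And>J \<omega>. finite J \<Longrightarrow> \<omega> \<in> PiE J (\<lambda>_. A) \<Longrightarrow> cylinder J \<omega> = {} \<Longrightarrow> W J \<omega> = 0"
begin

definition weight_pmf :: "'s list set \<Rightarrow> ('s list \<Rightarrow> 'a) pmf" where
  "weight_pmf J = embed_pmf (\<lambda>\<omega>. if \<omega> \<in> PiE J (\<lambda>_. A) then W J \<omega> else 0)"

lemma pmf_weight_pmf: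
  assumes "finite J"
  shows "pmf (weight_pmf J) \<omega> = (if \<omega> \<in> PiE J (\<lambda>_. A) then W J \<omega> else 0)"
  unfolding weight_pmf_def
proof (rule pmf_embed_pmf)
  show "(if \<omega> \<in> PiE J (\<lambda>_. A) then W J \<omega> else 0) \<ge> 0" for \<omega>
    using weights_nonneg[OF assms] by simp
  have "(\<integral>\<^sup>+ \<omega>. ennreal (if \<omega> \<in> PiE J (\<lambda>_. A) then W J \<omega> else 0) \<partial>count_space UNIV)
      = (\<Sum>\<omega>\<in>PiE J (\<lambda>_. A). ennreal (W J \<omega>))"
    by (subst nn_integral_count_space'[OF finite_PiE_actions[OF assms]]) auto
  also have "\<dots> = 1"
    using weights_nonneg[OF assms] weights_sum[OF assms] by (simp add: sum_ennreal)
  finally show "(\<integral>\<^sup>+ \<omega>. ennreal (if \<omega> \<in> PiE J (\<lambda>_. A) then W J \<omega> else 0) \<partial>count_space UNIV) = 1" .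
qed

lemma emeasure_weight_pmf:
  assumes "finite J"
  shows "emeasure (measure_pmf (weight_pmf J)) {f. restrict f J \<in> Y}
       = ennreal (\<Sum>\<omega>\<in>PiE J (\<lambda>_. A) \<inter> Y. W J \<omega>)"
proof -
  have "set_pmf (weight_pmf J) \<subseteq> PiE J (\<lambda>_. A)"
    by (auto simp: set_pmf_iff pmf_weight_pmf[OF assms] split: if_splits)
  then have "{f. restrict f J \<in> Y} \<inter> set_pmf (weight_pmf J) = (PiE J (\<lambda>_. A) \<inter> Y) \<inter> set_pmf (weight_pmf J)"
    by (auto simp: PiE_restrict)
  then have "emeasure (measure_pmf (weight_pmf J)) {f. restrict f J \<in> Y}
      = emeasure (measure_pmf (weight_pmf J)) (PiE J (\<lambda>_. A) \<inter> Y)"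
    by (metis emeasure_Int_set_pmf)
  also have "\<dots> = ennreal (\<Sum>\<omega>\<in>PiE J (\<lambda>_. A) \<inter> Y. pmf (weight_pmf J) \<omega>)"
    using finite_PiE_actions[OF assms] by (intro emeasure_measure_pmf_finite) simp
  also have "(\<Sum>\<omega>\<in>PiE J (\<lambda>_. A) \<inter> Y. pmf (weight_pmf J) \<omega>) = (\<Sum>\<omega>\<in>PiE J (\<lambda>_. A) \<inter> Y. W J \<omega>)"
    by (intro sum.cong) (simp_all add: pmf_weight_pmf[OF assms])
  finally show ?thesis .
qed

lemma sum_weights_restrict:
  assumes "J \<subseteq> H" "finite H"
  shows "(\<Sum>\<omega>'\<in>{\<omega>'\<in>PiE H (\<lambda>_. A). restrict \<omega>' J \<in> Y}. W H \<omega>') = (\<Sum>\<omega>\<in>PiE J (\<lambda>_. A) \<inter> Y. W J \<omega>)"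
proof -
  have "finite J"
    using assms finite_subset by blast
  have "(\<Sum>\<omega>'\<in>{\<omega>'\<in>PiE H (\<lambda>_. A). restrict \<omega>' J \<in> Y}. W H \<omega>')
      = (\<Sum>\<omega>\<in>PiE J (\<lambda>_. A) \<inter> Y. \<Sum>\<omega>'\<in>{x\<in>{\<omega>'\<in>PiE H (\<lambda>_. A). restrict \<omega>' J \<in> Y}. restrict x J = \<omega>}. W H \<omega>')"
  proof (rule sum.group[symmetric])
    show "(\<lambda>\<omega>'. restrict \<omega>' J) ` {\<omega>'\<in>PiE H (\<lambda>_. A). restrict \<omega>' J \<in> Y} \<subseteq> PiE J (\<lambda>_. A) \<inter> Y"
      using assms(1) by (auto simp: PiE_def Pi_def)
  qed (simp_all add: finite_PiE_actions assms(2) \<open>finite J\<close>)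
  also have "\<dots> = (\<Sum>\<omega>\<in>PiE J (\<lambda>_. A) \<inter> Y. W J \<omega>)"
  proof (rule sum.cong[OF refl])
    fix \<omega>
    assume \<omega>: "\<omega> \<in> PiE J (\<lambda>_. A) \<inter> Y"
    then have "{x\<in>{\<omega>'\<in>PiE H (\<lambda>_. A). restrict \<omega>' J \<in> Y}. restrict x J = \<omega>}
        = {\<omega>'\<in>PiE H (\<lambda>_. A). restrict \<omega>' J = \<omega>}"
      by auto
    then show "(\<Sum>\<omega>'\<in>{x\<in>{\<omega>'\<in>PiE H (\<lambda>_. A). restrict \<omega>' J \<in> Y}. restrict x J = \<omega>}. W H \<omega>') = W J \<omega>"
      using weights_consistent[OF assms(2,1), of \<omega>] \<omega> by simp
  qed
  finally show ?thesis .
qed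

definition marginal :: "'s list set \<Rightarrow> ('s list \<Rightarrow> 'a) measure" where
  "marginal J = distr (measure_pmf (weight_pmf J)) (PiM J (\<lambda>_. borel)) (\<lambda>f. restrict f J)"

lemma measurable_restrict_pmf:
  "(\<lambda>f. restrict f J) \<in> measurable (measure_pmf M) (PiM J (\<lambda>_. borel :: 'a measure))"
  by (simp add: measurable_pmf_measure1 space_PiM)

lemma sets_marginal: "sets (marginal J) = sets (PiM J (\<lambda>_. borel))"
  by (simp add: marginal_def)

lemma emeasure_marginal:
  assumes "finite J" "Y \<in> sets (PiM J (\<lambda>_. borel))"
  shows "emeasure (marginal J) Y = ennreal (\<Sum>\<omega>\<in>PiE J (\<lambda>_. A) \<inter> Y. W J \<omega>)"
proof -
  have "emeasure (marginal J) Y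
      = emeasure (measure_pmf (weight_pmf J)) ((\<lambda>f. restrict f J) -` Y \<inter> space (measure_pmf (weight_pmf J)))"
    unfolding marginal_def by (rule emeasure_distr[OF measurable_restrict_pmf assms(2)])
  also have "(\<lambda>f. restrict f J) -` Y \<inter> space (measure_pmf (weight_pmf J)) = {f. restrict f J \<in> Y}"
    by auto
  finally show ?thesis
    using emeasure_weight_pmf[OF assms(1)] by simp
qed

lemma marginal_restrict:
  assumes "J \<subseteq> H" "finite H"
  shows "marginal J = distr (marginal H) (PiM J (\<lambda>_. borel)) (\<lambda>f. restrict f J)"
proof (rule measure_eqI)
  have "finite J"
    using assms finite_subset by blast
  have restrict_J: "(\<lambda>f. restrict f J) \<in> measurable (marginal H) (PiM J (\<lambda>_. borel))"
    using measurable_restrict_subset[OF assms(1), of "\<lambda>_. borel :: 'a measure"]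
    by (simp add: measurable_cong_sets[OF sets_marginal refl])
  show "sets (marginal J) = sets (distr (marginal H) (PiM J (\<lambda>_. borel)) (\<lambda>f. restrict f J))"
    by (simp add: sets_marginal)
  fix Y
  assume "Y \<in> sets (marginal J)"
  then have Y: "Y \<in> sets (PiM J (\<lambda>_. borel))"
    by (simp add: sets_marginal)
  define Z where "Z = (\<lambda>f. restrict f J) -` Y \<inter> space (marginal H)"
  have Z: "Z \<in> sets (PiM H (\<lambda>_. borel))"
    unfolding Z_def using measurable_sets[OF restrict_J Y] by (simp add: sets_marginal)
  have PiE_Z: "PiE H (\<lambda>_. A) \<inter> Z = {\<omega>'\<in>PiE H (\<lambda>_. A). restrict \<omega>' J \<in> Y}"
    unfolding Z_def by (auto simp: space_PiM PiE_def Pi_def sets_eq_imp_space_eq[OF sets_marginal])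
  have "emeasure (distr (marginal H) (PiM J (\<lambda>_. borel)) (\<lambda>f. restrict f J)) Y = emeasure (marginal H) Z"
    unfolding Z_def by (rule emeasure_distr[OF restrict_J Y])
  also have "\<dots> = ennreal (\<Sum>\<omega>'\<in>{\<omega>'\<in>PiE H (\<lambda>_. A). restrict \<omega>' J \<in> Y}. W H \<omega>')"
    using emeasure_marginal[OF assms(2) Z] PiE_Z by simp
  also have "(\<Sum>\<omega>'\<in>{\<omega>'\<in>PiE H (\<lambda>_. A). restrict \<omega>' J \<in> Y}. W H \<omega>') = (\<Sum>\<omega>\<in>PiE J (\<lambda>_. A) \<inter> Y. W J \<omega>)"
    using assms by (rule sum_weights_restrict)
  finally show "emeasure (marginal J) Y = emeasure (distr (marginal H) (PiM J (\<lambda>_. borel)) (\<lambda>f. restrict f J)) Y"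
    using emeasure_marginal[OF \<open>finite J\<close> Y] by (simp only:)
qed

lemma polish_projective_marginal: "polish_projective UNIV marginal"
  unfolding polish_projective_def
proof (rule projective_family.intro)
  show "marginal J = distr (marginal H) (PiM J (\<lambda>_. borel)) (\<lambda>f. restrict f J)"
    if "J \<subseteq> H" "finite H" "H \<subseteq> UNIV" for J H :: "'s list set"
    using that by (intro marginal_restrict)
  show "prob_space (marginal J)" for J
    unfolding marginal_def
    by (rule prob_space.prob_space_distr[OF prob_space_measure_pmf measurable_restrict_pmf])
qed

interpretation K: polish_projective UNIV marginal
  by (rule polish_projective_marginal)

lemma sets_K_lim: "sets K.lim = sets (borel :: ('s list \<Rightarrow> 'a) measure)"
  using K.sets_lim sets_PiM_equal_borel by simp

lemma space_K_lim: "space K.lim = UNIV"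
  using sets_eq_imp_space_eq[OF sets_K_lim] by simp

lemma emeasure_K_lim:
  assumes "finite J" "Y \<in> sets (PiM J (\<lambda>_. borel))"
  shows "emeasure K.lim {f. restrict f J \<in> Y} = ennreal (\<Sum>\<omega>\<in>PiE J (\<lambda>_. A) \<inter> Y. W J \<omega>)"
proof -
  have "prod_emb UNIV (\<lambda>_. borel) J Y = {f. restrict f J \<in> Y}"
    by (auto simp: prod_emb_def)
  then show ?thesis
    using K.emeasure_lim_emb[of J Y] assms emeasure_marginal[OF assms] by simp
qed

lemma truncated_plans_null_complement:
  "UNIV - {f. restrict f (histories_upto N) \<in> truncated_plans N} \<in> null_sets K.lim"
proof -
  let ?T = "{f. restrict f (histories_upto N) \<in> truncated_plans N}"
  have T: "truncated_plans N \<in> sets (PiM (histories_upto N) (\<lambda>_. borel))"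
    using finite_histories_upto finite_truncated_plans
    by (rule finite_set_in_sets_PiM) (auto simp: truncated_plans_def PiE_def Pi_def)
  have "prod_emb UNIV (\<lambda>_. borel) (histories_upto N) (truncated_plans N) = ?T"
    by (auto simp: prod_emb_def)
  moreover have "prod_emb UNIV (\<lambda>_. borel) (histories_upto N) (truncated_plans N) \<in> sets K.lim"
    using measurable_prod_emb[OF _ T] K.sets_lim by simp
  ultimately have T_sets: "?T \<in> sets K.lim"
    by simp
  have "W (histories_upto N) \<omega> = 0"
    if "\<omega> \<in> PiE (histories_upto N) (\<lambda>_. A) - truncated_plans N" for \<omega>
  proof (rule weights_empty_cylinder[OF finite_histories_upto])
    show "cylinder (histories_upto N) \<omega> = {}"
      using that plans_iff_truncations unfolding cylinder_def by blast
  qed (use that in simp)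
  then have "(\<Sum>\<omega>\<in>PiE (histories_upto N) (\<lambda>_. A) \<inter> truncated_plans N. W (histories_upto N) \<omega>)
      = (\<Sum>\<omega>\<in>PiE (histories_upto N) (\<lambda>_. A). W (histories_upto N) \<omega>)"
    by (intro sum.mono_neutral_left finite_PiE_actions finite_histories_upto) auto
  then have "(\<Sum>\<omega>\<in>PiE (histories_upto N) (\<lambda>_. A) \<inter> truncated_plans N. W (histories_upto N) \<omega>) = 1"
    using weights_sum[OF finite_histories_upto] by simp
  then have "emeasure K.lim ?T = 1"
    using emeasure_K_lim[OF finite_histories_upto T] by simp
  then have "emeasure K.lim (space K.lim - ?T) = 0"
    using emeasure_compl[OF T_sets] K.P.emeasure_space_1 by simp
  then show ?thesis
    using sets.compl_sets[OF T_sets] space_K_lim by (simp add: null_sets_def)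
qed

lemma plans_null_complement: "UNIV - \<Omega> \<in> null_sets K.lim"
proof -
  have "UNIV - \<Omega> = (\<Union>N. UNIV - {f. restrict f (histories_upto N) \<in> truncated_plans N})"
    using plans_iff_truncations by blast
  also have "\<dots> \<in> null_sets K.lim"
    by (rule null_sets_UN) (rule truncated_plans_null_complement)
  finally show ?thesis .
qed

lemma plans_in_sets_K_lim: "\<Omega> \<in> sets K.lim"
  using sets.compl_sets[OF null_setsD2[OF plans_null_complement]] space_K_lim
  by (simp add: Diff_Diff_Int)

lemma exists_lottery_with_weights:
  "\<exists>Q\<in>lotteries. \<forall>J \<omega>. finite J \<longrightarrow> \<omega> \<in> PiE J (\<lambda>_. A) \<longrightarrow> measure Q (cylinder J \<omega>) = W J \<omega>"
proof (intro bexI allI impI)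
  define Q where "Q = restrict_space K.lim \<Omega>"
  have "emeasure K.lim (space K.lim - (UNIV - \<Omega>)) = emeasure K.lim (space K.lim)"
    by (rule emeasure_Diff_null_set[OF plans_null_complement]) simp
  then have "emeasure K.lim \<Omega> = 1"
    using space_K_lim K.P.emeasure_space_1 by (simp add: Diff_Diff_Int)
  then show "Q \<in> lotteries"
    unfolding Q_def lotteries_def
    by (simp add: prob_space_restrict_space[OF plans_in_sets_K_lim] sets_restrict_space_cong[OF sets_K_lim])
  fix J :: "'s list set" and \<omega>
  assume J: "finite J" and \<omega>: "\<omega> \<in> PiE J (\<lambda>_. A)"
  have "{\<omega>} \<in> sets (PiM J (\<lambda>_. borel :: 'a measure))"
    using J \<omega> by (intro finite_set_in_sets_PiM) (auto simp: PiE_def Pi_def)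
  from emeasure_K_lim[OF J this] \<omega> weights_nonneg[OF J \<omega>]
  have "measure K.lim {f. restrict f J \<in> {\<omega>}} = W J \<omega>"
    by (simp add: measure_def Int_absorb1)
  moreover have "{f. restrict f J \<in> {\<omega>}} \<in> sets K.lim"
    using restrict_eq_borel sets_K_lim by simp
  moreover have "cylinder J \<omega> = {f. restrict f J \<in> {\<omega>}} - (UNIV - \<Omega>)"
    by (auto simp: cylinder_def)
  ultimately have "measure K.lim (cylinder J \<omega>) = W J \<omega>"
    using measure_Diff_null_set[OF _ plans_null_complement] by simp
  then show "measure Q (cylinder J \<omega>) = W J \<omega>"
    unfolding Q_def using plans_in_sets_K_lim space_K_lim
    by (subst measure_restrict_space) (auto simp: cylinder_def)
qed

end

context lottery_space
begin

lemma cylinder_measures_convergent_subseq: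
  fixes Pk :: "nat \<Rightarrow> ('s list \<Rightarrow> 'a) measure"
  assumes Pk: "\<And>k. Pk k \<in> lotteries"
  shows "\<exists>r. strict_mono r \<and> (\<forall>J \<omega>. finite J \<longrightarrow> \<omega> \<in> PiE J (\<lambda>_. A) \<longrightarrow>
           convergent (\<lambda>k. measure (Pk (r k)) (cylinder J \<omega>)))"
proof -
  define T :: "('s list set \<times> ('s list \<Rightarrow> 'a)) set"
    where "T = (SIGMA J:{J. finite J}. PiE J (\<lambda>_. A))"
  have "countable T"
    unfolding T_def
  proof (rule countable_SIGMA)
    show "countable {J :: 's list set. finite J}"
      by (rule countable_Collect_finite)
    show "countable (PiE J (\<lambda>_. A))" if "J \<in> {J. finite J}" for J
      using that by (simp add: countable_finite finite_PiE_actions)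
  qed
  moreover have "bounded (range (\<lambda>k. measure (Pk k) (cylinder (fst t) (snd t))))" for t
  proof -
    have "\<bar>measure (Pk k) S\<bar> \<le> 1" for k S
      using prob_space.prob_le_1[OF lottery_prob_space[OF Pk]] by simp
    then show ?thesis
      unfolding bounded_real by blast
  qed
  ultimately have "\<exists>r. strict_mono r \<and> (\<forall>t\<in>T. convergent (\<lambda>k. measure (Pk (r k)) (cylinder (fst t) (snd t))))"
    by (rule diagonal_convergent_subseq)
  then obtain r where "strict_mono r"
    and conv: "\<forall>t\<in>T. convergent (\<lambda>k. measure (Pk (r k)) (cylinder (fst t) (snd t)))"
    by blast
  have "convergent (\<lambda>k. measure (Pk (r k)) (cylinder J \<omega>))"
    if "finite J" "\<omega> \<in> PiE J (\<lambda>_. A)" for J \<omega>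
  proof -
    have "(J, \<omega>) \<in> T"
      using that by (simp add: T_def)
    with conv show ?thesis
      by (metis fst_conv snd_conv)
  qed
  then show ?thesis
    using \<open>strict_mono r\<close> by blast
qed

lemma cylinder_weights_of_limits:
  assumes Pk: "\<And>k. Pk k \<in> lotteries"
    and lim: "\<And>J \<omega>. finite J \<Longrightarrow> \<omega> \<in> PiE J (\<lambda>_. A) \<Longrightarrow>
                (\<lambda>k. measure (Pk k) (cylinder J \<omega>)) \<longlonglongrightarrow> W J \<omega>"
  shows "cylinder_weights \<zeta> p A x0 W"
proof (unfold_locales)
  fix J :: "'s list set" and \<omega>
  assume "finite J" "\<omega> \<in> PiE J (\<lambda>_. A)"
  show "W J \<omega> \<ge> 0"
    by (rule LIMSEQ_le_const[OF lim[OF \<open>finite J\<close> \<open>\<omega> \<in> PiE J (\<lambda>_. A)\<close>]]) simp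
next
  fix J :: "'s list set"
  assume "finite J"
  then have "(\<lambda>k. \<Sum>\<omega>\<in>PiE J (\<lambda>_. A). measure (Pk k) (cylinder J \<omega>)) \<longlonglongrightarrow> (\<Sum>\<omega>\<in>PiE J (\<lambda>_. A). W J \<omega>)"
    by (intro tendsto_sum lim)
  then show "(\<Sum>\<omega>\<in>PiE J (\<lambda>_. A). W J \<omega>) = 1"
    using sum_measure_cylinders[OF Pk \<open>finite J\<close>] by (simp add: LIMSEQ_const_iff)
next
  fix J H :: "'s list set" and \<omega>
  assume "finite H" "J \<subseteq> H" "\<omega> \<in> PiE J (\<lambda>_. A)"
  have "finite J"
    using \<open>finite H\<close> \<open>J \<subseteq> H\<close> finite_subset by blast
  have "(\<lambda>k. measure (Pk k) (cylinder J \<omega>))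
      \<longlonglongrightarrow> (\<Sum>\<omega>'\<in>{\<omega>'\<in>PiE H (\<lambda>_. A). restrict \<omega>' J = \<omega>}. W H \<omega>')"
    unfolding measure_cylinder_refine[OF Pk \<open>finite H\<close> \<open>J \<subseteq> H\<close>]
    using \<open>finite H\<close> by (intro tendsto_sum lim) auto
  with lim[OF \<open>finite J\<close> \<open>\<omega> \<in> PiE J (\<lambda>_. A)\<close>]
  show "W J \<omega> = (\<Sum>\<omega>'\<in>{\<omega>'\<in>PiE H (\<lambda>_. A). restrict \<omega>' J = \<omega>}. W H \<omega>')"
    by (rule LIMSEQ_unique)
next
  fix J :: "'s list set" and \<omega>
  assume "finite J" "\<omega> \<in> PiE J (\<lambda>_. A)" "cylinder J \<omega> = {}"
  then show "W J \<omega> = 0"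
    using lim[OF \<open>finite J\<close> \<open>\<omega> \<in> PiE J (\<lambda>_. A)\<close>] by (simp add: LIMSEQ_const_iff)
qed

lemma lotteries_sequentially_compact:
  fixes Pk :: "nat \<Rightarrow> ('s list \<Rightarrow> 'a) measure"
  assumes Pk: "\<And>k. Pk k \<in> lotteries"
  shows "\<exists>r Q. strict_mono r \<and> Q \<in> lotteries \<and> cylinder_tendsto (Pk \<circ> r) Q"
proof -
  obtain r where r: "strict_mono r" and conv: "\<forall>J \<omega>. finite J \<longrightarrow> \<omega> \<in> PiE J (\<lambda>_. A) \<longrightarrow>
      convergent (\<lambda>k. measure (Pk (r k)) (cylinder J \<omega>))"
    using cylinder_measures_convergent_subseq[of Pk, OF Pk] by blast
  define W where "W J \<omega> = lim (\<lambda>k. measure (Pk (r k)) (cylinder J \<omega>))" for J \<omega>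
  have lim: "(\<lambda>k. measure (Pk (r k)) (cylinder J \<omega>)) \<longlonglongrightarrow> W J \<omega>"
    if "finite J" "\<omega> \<in> PiE J (\<lambda>_. A)" for J \<omega>
    using conv that unfolding W_def by (simp add: convergent_LIMSEQ_iff)
  have "cylinder_weights \<zeta> p A x0 W"
    using Pk lim by (rule cylinder_weights_of_limits)
  from cylinder_weights.exists_lottery_with_weights[OF this]
  obtain Q where Q: "Q \<in> lotteries"
    and Q_cylinder: "\<And>J \<omega>. finite J \<Longrightarrow> \<omega> \<in> PiE J (\<lambda>_. A) \<Longrightarrow> measure Q (cylinder J \<omega>) = W J \<omega>"
    by blast
  have "(\<lambda>k. measure (Pk (r k)) (cylinder J \<omega>)) \<longlonglongrightarrow> measure Q (cylinder J \<omega>)" if "finite J" for J \<omega>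
  proof (cases "\<omega> \<in> PiE J (\<lambda>_. A)")
    case True
    then show ?thesis
      using lim[OF that True] Q_cylinder[OF that True] by simp
  next
    case False
    then show ?thesis
      using cylinder_eq_empty[OF False] by simp
  qed
  then have "cylinder_tendsto (Pk \<circ> r) Q"
    by (simp add: cylinder_tendsto_def)
  then show ?thesis
    using r Q by blast
qed

end

locale discounted_lottery_space = lottery_space \<zeta> p A x0
  for \<zeta> :: "'x \<Rightarrow> 'a::polish_space \<Rightarrow> 's::finite \<Rightarrow> 'x" and p A x0 +
  fixes \<beta> :: real and \<pi> :: "'s \<Rightarrow> 's \<Rightarrow> real" and X :: "'x set"
  assumes transition_nonneg: "\<And>s s'. \<pi> s s' \<ge> 0"
    and transition_sum: "\<And>s. (\<Sum>s'\<in>UNIV. \<pi> s s') = 1"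
    and discount: "0 \<le> \<beta>" "\<beta> < 1"
    and states_closed: "\<And>y c s. y \<in> X \<Longrightarrow> c \<in> A \<Longrightarrow> \<zeta> y c s \<in> X"
    and initial_state: "x0 \<in> X"
begin

definition bounded_payoff :: "('x \<Rightarrow> 'a \<Rightarrow> 's \<Rightarrow> real) \<Rightarrow> bool" where
  "bounded_payoff f \<longleftrightarrow> (\<exists>B. \<forall>y\<in>X. \<forall>c\<in>A. \<forall>s. \<bar>f y c s\<bar> \<le> B)"

lemma flow_bounded:
  assumes "bounded_payoff f"
  shows "\<exists>B. \<forall>a\<in>\<Omega>. \<forall>h. \<bar>flow \<zeta> a x0 f h\<bar> \<le> B"
proof -
  obtain B where B: "\<forall>y\<in>X. \<forall>c\<in>A. \<forall>s. \<bar>f y c s\<bar> \<le> B"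
    using assms unfolding bounded_payoff_def by blast
  have "\<bar>flow \<zeta> a x0 f h\<bar> \<le> B" if "a \<in> \<Omega>" for a h
  proof -
    have "xp \<zeta> a x0 h \<in> X"
      by (rule xp_in[where A=A]) (use initial_state states_closed plan_in_actions[OF that] in auto)
    then show ?thesis
      using B plan_in_actions[OF that] by (simp add: flow_def)
  qed
  then show ?thesis
    by blast
qed

lemma cexp_flow_depends_on:
  "depends_on (histories_upto (length h + n)) (\<lambda>a. cexp \<pi> h n (flow \<zeta> a x0 f))"
  unfolding depends_on_def
proof (intro ballI impI)
  fix a b :: "'s list \<Rightarrow> 'a"
  assume "\<forall>j\<in>histories_upto (length h + n). a j = b j"
  then show "cexp \<pi> h n (flow \<zeta> a x0 f) = cexp \<pi> h n (flow \<zeta> b x0 f)"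
    by (intro cexp_cong flow_cong) (auto simp: histories_upto_def)
qed

lemma disc_flow_finitely_approximable:
  assumes "bounded_payoff f"
  shows "finitely_approximable (\<lambda>a. disc \<beta> \<pi> h (flow \<zeta> a x0 f))"
proof -
  obtain B where "\<forall>a\<in>\<Omega>. \<forall>h. \<bar>flow \<zeta> a x0 f h\<bar> \<le> B"
    using flow_bounded[OF assms] by blast
  then show ?thesis
    unfolding disc_def using discount finite_histories_upto cexp_flow_depends_on
    by (intro finitely_approximable_suminf[where B=B and J="\<lambda>n. histories_upto (length h + n)"]
        cexp_abs_le transition_nonneg transition_sum) auto
qed

lemma disc_flow_linear:
  assumes "a \<in> \<Omega>" "bounded_payoff f" "\<And>i. bounded_payoff (g i)"
  shows "disc \<beta> \<pi> h (flow \<zeta> a x0 (\<lambda>y c s. f y c s + (\<Sum>i\<in>I. w i * g i y c s)))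
       = disc \<beta> \<pi> h (flow \<zeta> a x0 f) + (\<Sum>i\<in>I. w i * disc \<beta> \<pi> h (flow \<zeta> a x0 (g i)))"
proof -
  obtain B where B: "\<And>h. \<bar>flow \<zeta> a x0 f h\<bar> \<le> B"
    using flow_bounded[OF assms(2)] assms(1) by blast
  have "\<forall>i. \<exists>C. \<forall>h. \<bar>flow \<zeta> a x0 (g i) h\<bar> \<le> C"
    using flow_bounded[OF assms(3)] assms(1) by blast
  then obtain C where C: "\<And>i h. \<bar>flow \<zeta> a x0 (g i) h\<bar> \<le> C i"
    by metis
  have "flow \<zeta> a x0 (\<lambda>y c s. f y c s + (\<Sum>i\<in>I. w i * g i y c s))
      = (\<lambda>h'. flow \<zeta> a x0 f h' + (\<Sum>i\<in>I. w i * flow \<zeta> a x0 (g i) h'))"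
    by (simp add: flow_def fun_eq_iff)
  then show ?thesis
    using disc_add_sum[OF transition_nonneg transition_sum discount B C] by simp
qed

definition history_indicator :: "'s list \<Rightarrow> 'a list \<Rightarrow> ('s list \<Rightarrow> 'a) \<Rightarrow> real" where
  "history_indicator h as a = (if \<forall>k < length h - 1. a (take (Suc k) h) = as ! k then 1 else 0)"

lemma history_indicator_depends_on: "depends_on (histories_upto (length h)) (history_indicator h as)"
  unfolding depends_on_def
proof (intro ballI impI)
  fix a b :: "'s list \<Rightarrow> 'a"
  assume "\<forall>j\<in>histories_upto (length h). a j = b j"
  then have "a (take (Suc k) h) = b (take (Suc k) h)" for k
    by (auto simp: histories_upto_def)
  then show "history_indicator h as a = history_indicator h as b"
    by (simp add: history_indicator_def)
qed

lemma constraint_finitely_approximable: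
  assumes "bounded_payoff f"
  shows "finitely_approximable (\<lambda>a. history_indicator h as a * (disc \<beta> \<pi> h (flow \<zeta> a x0 f) - c))"
  using finite_histories_upto history_indicator_depends_on
  by (intro finitely_approximable_mult depends_on_finitely_approximable finitely_approximable_diff
      disc_flow_finitely_approximable[OF assms] finitely_approximable_const)

end

locale lottery_problem = discounted_lottery_space \<zeta> p A x0 \<beta> \<pi> X
  for \<zeta> :: "'x \<Rightarrow> 'a::polish_space \<Rightarrow> 's::finite \<Rightarrow> 'x" and p A x0 \<beta> \<pi> X +
  fixes r :: "'x \<Rightarrow> 'a \<Rightarrow> 's \<Rightarrow> real" and g :: "'i::finite \<Rightarrow> 'x \<Rightarrow> 'a \<Rightarrow> 's \<Rightarrow> real"
    and gbar :: "'i \<Rightarrow> real" and s0 :: 's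
  assumes bounded_reward: "bounded_payoff r"
    and bounded_constraints: "\<And>i. bounded_payoff (g i)"
    and feasible_plan_exists: "\<exists>a. det_feasible \<beta> \<pi> \<zeta> p A g gbar x0 s0 a"
begin

abbreviation feasible :: "('s list \<Rightarrow> 'a) measure \<Rightarrow> bool" where
  "feasible P \<equiv> lottery_feasible \<beta> \<pi> \<zeta> p A g gbar x0 s0 P"

abbreviation obj :: "real^'i \<Rightarrow> ('s list \<Rightarrow> 'a) measure \<Rightarrow> real" where
  "obj \<gamma> P \<equiv> objective \<beta> \<pi> \<zeta> r g \<gamma> x0 s0 P"

abbreviation V :: "real^'i \<Rightarrow> real" where
  "V \<gamma> \<equiv> Vval \<beta> \<pi> \<zeta> p A r g gbar \<gamma> x0 s0"

definition reward :: "('s list \<Rightarrow> 'a) measure \<Rightarrow> real" where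
  "reward P = (\<integral>a. disc \<beta> \<pi> [s0] (flow \<zeta> a x0 r) \<partial>P)"

definition promise :: "('s list \<Rightarrow> 'a) measure \<Rightarrow> real^'i" where
  "promise P = (\<chi> i. \<integral>a. disc \<beta> \<pi> [s0] (flow \<zeta> a x0 (g i)) \<partial>P)"

lemma feasible_iff:
  "feasible P \<longleftrightarrow> P \<in> lotteries \<and>
     (\<forall>h as i. h \<noteq> [] \<longrightarrow> hd h = s0 \<longrightarrow> length as = length h - 1 \<longrightarrow> set as \<subseteq> A \<longrightarrow>
        (\<integral>a. history_indicator h as a * (disc \<beta> \<pi> h (flow \<zeta> a x0 (g i)) - gbar i) \<partial>P) \<ge> 0)"
  unfolding lottery_feasible_def lotteries_def history_indicator_def by simp

lemma feasible_lottery: "feasible P \<Longrightarrow> P \<in> lotteries"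
  by (simp add: feasible_iff)

lemma disc_integrable:
  "bounded_payoff f \<Longrightarrow> P \<in> lotteries \<Longrightarrow> integrable P (\<lambda>a. disc \<beta> \<pi> h (flow \<zeta> a x0 f))"
  by (rule finitely_approximable_integrable[OF disc_flow_finitely_approximable])

lemma objective_eq:
  assumes "P \<in> lotteries"
  shows "obj \<gamma> P = reward P + \<gamma> \<bullet> promise P"
proof -
  have "obj \<gamma> P = (\<integral>a. disc \<beta> \<pi> [s0] (flow \<zeta> a x0 r)
      + (\<Sum>i\<in>UNIV. \<gamma> $ i * disc \<beta> \<pi> [s0] (flow \<zeta> a x0 (g i))) \<partial>P)"
    unfolding objective_def using space_lottery[OF assms]
    by (intro Bochner_Integration.integral_cong disc_flow_linear bounded_reward bounded_constraints) auto
  also have "\<dots> = reward P + (\<Sum>i\<in>UNIV. \<gamma> $ i * (\<integral>a. disc \<beta> \<pi> [s0] (flow \<zeta> a x0 (g i)) \<partial>P))"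
    using disc_integrable[OF bounded_reward assms] disc_integrable[OF bounded_constraints assms]
    by (simp add: reward_def)
  also have "\<dots> = reward P + \<gamma> \<bullet> promise P"
    by (simp add: promise_def inner_vec_def)
  finally show ?thesis .
qed

lemma reward_promise_bounded: "\<exists>B. \<forall>P\<in>lotteries. \<bar>reward P\<bar> \<le> B \<and> norm (promise P) \<le> B"
proof -
  obtain BR where BR: "\<forall>P\<in>lotteries. \<bar>reward P\<bar> \<le> BR"
    using finitely_approximable_integral_bounded[OF disc_flow_finitely_approximable[OF bounded_reward]]
    unfolding reward_def by blast
  have "\<forall>i. \<exists>B. \<forall>P\<in>lotteries. \<bar>promise P $ i\<bar> \<le> B"
    using finitely_approximable_integral_bounded[OF disc_flow_finitely_approximable[OF bounded_constraints]]
    by (simp add: promise_def)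
  then obtain BG where BG: "\<And>i P. P \<in> lotteries \<Longrightarrow> \<bar>promise P $ i\<bar> \<le> BG i"
    by metis
  have "norm (promise P) \<le> (\<Sum>i\<in>UNIV. BG i)" if "P \<in> lotteries" for P
  proof -
    have "(\<Sum>i\<in>UNIV. \<bar>promise P $ i\<bar>) \<le> (\<Sum>i\<in>UNIV. BG i)"
      by (intro sum_mono BG[OF that])
    then show ?thesis
      using norm_le_l1_cart[of "promise P"] by linarith
  qed
  then have "\<forall>P\<in>lotteries. \<bar>reward P\<bar> \<le> max BR (\<Sum>i\<in>UNIV. BG i) \<and> norm (promise P) \<le> max BR (\<Sum>i\<in>UNIV. BG i)"
    using BR by fastforce
  then show ?thesis ..
qed

lemma reward_tendsto:
  "(\<And>k. Pk k \<in> lotteries) \<Longrightarrow> Q \<in> lotteries \<Longrightarrow> cylinder_tendsto Pk Q \<Longrightarrow>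
    (\<lambda>k. reward (Pk k)) \<longlonglongrightarrow> reward Q"
  unfolding reward_def
  by (rule integral_tendsto_finitely_approximable[OF _ _ _ disc_flow_finitely_approximable[OF bounded_reward]])

lemma promise_tendsto:
  "(\<And>k. Pk k \<in> lotteries) \<Longrightarrow> Q \<in> lotteries \<Longrightarrow> cylinder_tendsto Pk Q \<Longrightarrow>
    (\<lambda>k. promise (Pk k)) \<longlonglongrightarrow> promise Q"
  unfolding promise_def
  by (intro tendsto_vec_lambda integral_tendsto_finitely_approximable
      disc_flow_finitely_approximable bounded_constraints)

lemma feasible_exists: "\<exists>P. feasible P"
proof -
  obtain a0 where a0: "det_feasible \<beta> \<pi> \<zeta> p A g gbar x0 s0 a0"
    using feasible_plan_exists by blast
  then have "a0 \<in> \<Omega>"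
    by (simp add: det_feasible_def)
  define P where "P = return (restrict_space borel \<Omega>) a0"
  have P: "P \<in> lotteries"
    unfolding P_def using \<open>a0 \<in> \<Omega>\<close> by (rule return_lottery)
  have "(\<integral>a. history_indicator h as a * (disc \<beta> \<pi> h (flow \<zeta> a x0 (g i)) - gbar i) \<partial>P)
      = history_indicator h as a0 * (disc \<beta> \<pi> h (flow \<zeta> a0 x0 (g i)) - gbar i)" for h as i
    unfolding P_def
    using \<open>a0 \<in> \<Omega>\<close> finitely_approximable_measurable[OF constraint_finitely_approximable[OF bounded_constraints] P]
    by (intro integral_return) (auto simp: P_def space_restrict_space)
  moreover have "history_indicator h as a0 * (disc \<beta> \<pi> h (flow \<zeta> a0 x0 (g i)) - gbar i) \<ge> 0"
    if "h \<noteq> []" "hd h = s0" for h as i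
    using a0 that by (auto simp: det_feasible_def history_indicator_def)
  ultimately have "feasible P"
    using P by (simp add: feasible_iff)
  then show ?thesis ..
qed

lemma feasible_limit:
  assumes "\<And>k. feasible (Pk k)" "Q \<in> lotteries" "cylinder_tendsto Pk Q"
  shows "feasible Q"
  unfolding feasible_iff
proof (intro conjI allI impI assms(2))
  fix h as i
  assume "h \<noteq> []" "hd h = s0" "length as = length h - 1" "set as \<subseteq> A"
  then have "\<forall>k. (\<integral>a. history_indicator h as a * (disc \<beta> \<pi> h (flow \<zeta> a x0 (g i)) - gbar i) \<partial>Pk k) \<ge> 0"
    using assms(1) by (simp add: feasible_iff)
  moreover have "(\<lambda>k. \<integral>a. history_indicator h as a * (disc \<beta> \<pi> h (flow \<zeta> a x0 (g i)) - gbar i) \<partial>Pk k)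
      \<longlonglongrightarrow> (\<integral>a. history_indicator h as a * (disc \<beta> \<pi> h (flow \<zeta> a x0 (g i)) - gbar i) \<partial>Q)"
    using feasible_lottery[OF assms(1)] assms(2,3)
    by (rule integral_tendsto_finitely_approximable[OF _ _ _ constraint_finitely_approximable[OF bounded_constraints]])
  ultimately show "(\<integral>a. history_indicator h as a * (disc \<beta> \<pi> h (flow \<zeta> a x0 (g i)) - gbar i) \<partial>Q) \<ge> 0"
    by (intro LIMSEQ_le_const) auto
qed

lemma feasible_mixture:
  assumes "feasible P1" "feasible P2" "0 \<le> t" "t \<le> 1"
  shows "\<exists>P. feasible P \<and> reward P = t * reward P1 + (1 - t) * reward P2
              \<and> promise P = t *\<^sub>R promise P1 + (1 - t) *\<^sub>R promise P2"
proof -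
  obtain P where P: "P \<in> lotteries" and mix: "\<And>F. finitely_approximable F \<Longrightarrow>
      integral\<^sup>L P F = t * integral\<^sup>L P1 F + (1 - t) * integral\<^sup>L P2 F"
    using lottery_mixture[OF feasible_lottery[OF assms(1)] feasible_lottery[OF assms(2)] assms(3,4)] by blast
  have "feasible P"
    unfolding feasible_iff
  proof (intro conjI allI impI P)
    fix h as i
    assume "h \<noteq> []" "hd h = s0" "length as = length h - 1" "set as \<subseteq> A"
    then show "(\<integral>a. history_indicator h as a * (disc \<beta> \<pi> h (flow \<zeta> a x0 (g i)) - gbar i) \<partial>P) \<ge> 0"
      using assms mix[OF constraint_finitely_approximable[OF bounded_constraints]]
      by (simp add: feasible_iff)
  qed
  moreover have "reward P = t * reward P1 + (1 - t) * reward P2"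
    unfolding reward_def by (rule mix[OF disc_flow_finitely_approximable[OF bounded_reward]])
  moreover have "promise P = t *\<^sub>R promise P1 + (1 - t) *\<^sub>R promise P2"
    unfolding promise_def
    by (simp add: vec_eq_iff mix[OF disc_flow_finitely_approximable[OF bounded_constraints]])
  ultimately show ?thesis
    by blast
qed

lemma feasible_convergent_subseq:
  fixes Pk :: "nat \<Rightarrow> ('s list \<Rightarrow> 'a) measure"
  assumes "\<And>k. feasible (Pk k)"
  shows "\<exists>r Q. strict_mono r \<and> feasible Q \<and> (\<lambda>k. reward (Pk (r k))) \<longlonglongrightarrow> reward Q
           \<and> (\<lambda>k. promise (Pk (r k))) \<longlonglongrightarrow> promise Q"
proof -
  have "\<exists>r Q. strict_mono r \<and> Q \<in> lotteries \<and> cylinder_tendsto (Pk \<circ> r) Q"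
    by (rule lotteries_sequentially_compact) (rule feasible_lottery[OF assms])
  then obtain r Q where r: "strict_mono r" and Q: "Q \<in> lotteries" and lim: "cylinder_tendsto (Pk \<circ> r) Q"
    by blast
  have Pk_r: "(Pk \<circ> r) k \<in> lotteries" for k
    using feasible_lottery[OF assms] by simp
  have "feasible Q"
    using Q lim by (rule feasible_limit[of "Pk \<circ> r", rotated]) (simp add: assms)
  moreover have "(\<lambda>k. reward (Pk (r k))) \<longlonglongrightarrow> reward Q"
    using reward_tendsto[OF Pk_r Q lim] by simp
  moreover have "(\<lambda>k. promise (Pk (r k))) \<longlonglongrightarrow> promise Q"
    using promise_tendsto[OF Pk_r Q lim] by simp
  ultimately show ?thesis
    using r by blast
qed

lemma objective_bounded_above: "\<exists>c. \<forall>P. feasible P \<longrightarrow> obj \<gamma> P \<le> c"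
proof -
  obtain B where B: "\<forall>P\<in>lotteries. \<bar>reward P\<bar> \<le> B \<and> norm (promise P) \<le> B"
    using reward_promise_bounded by blast
  have "obj \<gamma> P \<le> B + norm \<gamma> * B" if "feasible P" for P
  proof -
    have P: "P \<in> lotteries"
      using that by (rule feasible_lottery)
    have "\<gamma> \<bullet> promise P \<le> norm \<gamma> * norm (promise P)"
      by (rule norm_cauchy_schwarz)
    also have "\<dots> \<le> norm \<gamma> * B"
      using B P by (simp add: mult_left_mono)
    moreover have "\<bar>reward P\<bar> \<le> B"
      using B P by blast
    ultimately show ?thesis
      using objective_eq[OF P, of \<gamma>] by linarith
  qed
  then show ?thesis
    by blast
qed

lemma objective_le_V: "feasible P \<Longrightarrow> obj \<gamma> P \<le> V \<gamma>"
  unfolding Vval_def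
  by (rule cSup_upper) (use objective_bounded_above[of \<gamma>] in \<open>auto simp: bdd_above_def\<close>)

lemma V_approx:
  assumes "e > 0"
  shows "\<exists>P. feasible P \<and> V \<gamma> - e < obj \<gamma> P"
proof -
  have ne: "obj \<gamma> ` {P. feasible P} \<noteq> {}"
    using feasible_exists by blast
  have bdd: "bdd_above (obj \<gamma> ` {P. feasible P})"
    using objective_bounded_above[of \<gamma>] by (auto simp: bdd_above_def)
  have "V \<gamma> - e < Sup (obj \<gamma> ` {P. feasible P})"
    using assms by (simp add: Vval_def)
  then obtain y where "y \<in> obj \<gamma> ` {P. feasible P}" "V \<gamma> - e < y"
    unfolding less_cSup_iff[OF ne bdd] by blast
  then show ?thesis
    by blast
qed

lemma optimal_limit:
  fixes Pk :: "nat \<Rightarrow> ('s list \<Rightarrow> 'a) measure"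
  assumes "\<And>k. feasible (Pk k)" "(\<lambda>k. obj \<gamma> (Pk k)) \<longlonglongrightarrow> V \<gamma>"
  shows "\<exists>r Q. strict_mono r \<and> feasible Q \<and> obj \<gamma> Q = V \<gamma> \<and> (\<lambda>k. promise (Pk (r k))) \<longlonglongrightarrow> promise Q"
proof -
  obtain r Q where r: "strict_mono r" and Q: "feasible Q"
    and reward: "(\<lambda>k. reward (Pk (r k))) \<longlonglongrightarrow> reward Q"
    and promise: "(\<lambda>k. promise (Pk (r k))) \<longlonglongrightarrow> promise Q"
    using feasible_convergent_subseq[where Pk=Pk, OF assms(1)] by blast
  have "(\<lambda>k. obj \<gamma> (Pk (r k))) \<longlonglongrightarrow> obj \<gamma> Q"
    unfolding objective_eq[OF feasible_lottery[OF assms(1)]] objective_eq[OF feasible_lottery[OF Q]]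
    by (intro tendsto_add tendsto_inner tendsto_const reward promise)
  moreover have "(\<lambda>k. obj \<gamma> (Pk (r k))) \<longlonglongrightarrow> V \<gamma>"
    using LIMSEQ_subseq_LIMSEQ[OF assms(2) r] by (simp add: comp_def)
  ultimately have "obj \<gamma> Q = V \<gamma>"
    by (rule LIMSEQ_unique)
  then show ?thesis
    using r Q promise by blast
qed

lemma promise_subgradient:
  assumes "feasible Q" "obj \<gamma> Q = V \<gamma>"
  shows "promise Q \<in> subdifferential (\<lambda>\<gamma>'. V \<gamma>') \<gamma>"
  unfolding subdifferential_def
proof (intro CollectI allI)
  fix \<gamma>'
  have "obj \<gamma>' Q = obj \<gamma> Q + promise Q \<bullet> (\<gamma>' - \<gamma>)"
    unfolding objective_eq[OF feasible_lottery[OF assms(1)]] by (simp add: inner_diff_left inner_commute)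
  then have "V \<gamma> + promise Q \<bullet> (\<gamma>' - \<gamma>) = obj \<gamma>' Q"
    using assms(2) by simp
  also have "\<dots> \<le> V \<gamma>'"
    by (rule objective_le_V[OF assms(1)])
  finally show "V \<gamma> + promise Q \<bullet> (\<gamma>' - \<gamma>) \<le> V \<gamma>'" .
qed

lemma Wval_eq_Sup_constrained:
  "Wval \<beta> \<pi> \<zeta> p A r g gbar \<gamma> x0 s0 \<phi>
     = Sup ((\<lambda>P. ereal (obj \<gamma> P)) ` {P. feasible P \<and> (\<forall>i. \<phi> $ i \<le> promise P $ i)})"
  by (simp add: Wval_def promise_def)

lemma Sup_constrained_eq_V_imp_dominating_subgradient:
  assumes "Sup ((\<lambda>P. ereal (obj \<gamma> P)) ` {P. feasible P \<and> (\<forall>i. \<phi> $ i \<le> promise P $ i)}) = ereal (V \<gamma>)"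
  shows "\<exists>\<phi>D \<in> subdifferential (\<lambda>\<gamma>'. V \<gamma>') \<gamma>. \<forall>i. \<phi> $ i \<le> \<phi>D $ i"
proof -
  have "\<exists>P. feasible P \<and> (\<forall>i. \<phi> $ i \<le> promise P $ i) \<and> V \<gamma> - 1 / real (Suc k) < obj \<gamma> P" for k
  proof (rule ccontr)
    assume "\<not> ?thesis"
    then have "Sup ((\<lambda>P. ereal (obj \<gamma> P)) ` {P. feasible P \<and> (\<forall>i. \<phi> $ i \<le> promise P $ i)})
        \<le> ereal (V \<gamma> - 1 / real (Suc k))"
      by (intro Sup_least) auto
    then show False
      using assms by simp
  qed
  then obtain Pk where Pk: "\<And>k. feasible (Pk k)" "\<And>k i. \<phi> $ i \<le> promise (Pk k) $ i"
    "\<And>k. V \<gamma> - 1 / real (Suc k) < obj \<gamma> (Pk k)"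
    by metis
  have "V \<gamma> - 1 / real (Suc k) \<le> obj \<gamma> (Pk k)" for k
    using Pk(3)[of k] by simp
  then have "(\<lambda>k. obj \<gamma> (Pk k)) \<longlonglongrightarrow> V \<gamma>"
    by (rule LIMSEQ_squeeze_inverse_Suc) (rule objective_le_V[OF Pk(1)])
  then obtain r Q where Q: "feasible Q" "obj \<gamma> Q = V \<gamma>"
    and promise: "(\<lambda>k. promise (Pk (r k))) \<longlonglongrightarrow> promise Q"
    using optimal_limit[where Pk=Pk, OF Pk(1)] by blast
  have "\<phi> $ i \<le> promise Q $ i" for i
    by (rule LIMSEQ_le_const[OF tendsto_vec_nth[OF promise]]) (use Pk(2) in auto)
  then show ?thesis
    using promise_subgradient[OF Q] by blast
qed

definition optimal_promises :: "real^'i \<Rightarrow> (real^'i) set" where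
  "optimal_promises \<gamma> = {v. \<exists>Q. feasible Q \<and> obj \<gamma> Q = V \<gamma> \<and> (\<forall>i. v $ i \<le> promise Q $ i)}"

lemma convex_optimal_promises: "convex (optimal_promises \<gamma>)"
  unfolding convex_alt
proof (intro ballI allI impI)
  fix v w :: "real^'i" and t :: real
  assume "v \<in> optimal_promises \<gamma>" "w \<in> optimal_promises \<gamma>" and "0 \<le> t \<and> t \<le> 1"
  then have t: "0 \<le> t" "t \<le> 1"
    by simp_all
  from \<open>v \<in> optimal_promises \<gamma>\<close> \<open>w \<in> optimal_promises \<gamma>\<close>
  obtain Q1 Q2 where Q1: "feasible Q1" "obj \<gamma> Q1 = V \<gamma>" "\<And>i. v $ i \<le> promise Q1 $ i"
    and Q2: "feasible Q2" "obj \<gamma> Q2 = V \<gamma>" "\<And>i. w $ i \<le> promise Q2 $ i"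
    unfolding optimal_promises_def by blast
  obtain P where P: "feasible P" and reward: "reward P = (1 - t) * reward Q1 + t * reward Q2"
    and promise: "promise P = (1 - t) *\<^sub>R promise Q1 + t *\<^sub>R promise Q2"
    using feasible_mixture[OF Q1(1) Q2(1), of "1 - t"] t by auto
  have "obj \<gamma> P = (1 - t) * obj \<gamma> Q1 + t * obj \<gamma> Q2"
    unfolding objective_eq[OF feasible_lottery[OF P]] objective_eq[OF feasible_lottery[OF Q1(1)]]
      objective_eq[OF feasible_lottery[OF Q2(1)]] reward promise
    by (simp add: inner_add_right algebra_simps)
  then have "obj \<gamma> P = V \<gamma>"
    using Q1(2) Q2(2) by (simp add: algebra_simps)
  moreover have "((1 - t) *\<^sub>R v + t *\<^sub>R w) $ i \<le> promise P $ i" for i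
    unfolding promise using t Q1(3) Q2(3) by (simp add: add_mono mult_left_mono)
  ultimately show "(1 - t) *\<^sub>R v + t *\<^sub>R w \<in> optimal_promises \<gamma>"
    using P unfolding optimal_promises_def by blast
qed

lemma closed_optimal_promises: "closed (optimal_promises \<gamma>)"
  unfolding closed_sequential_limits
proof (intro allI impI, elim conjE)
  fix v :: "nat \<Rightarrow> real^'i" and w
  assume "\<forall>n. v n \<in> optimal_promises \<gamma>" and v: "v \<longlonglongrightarrow> w"
  then have "\<forall>n. \<exists>Q. feasible Q \<and> obj \<gamma> Q = V \<gamma> \<and> (\<forall>i. v n $ i \<le> promise Q $ i)"
    by (simp add: optimal_promises_def)
  then obtain Qn where Qn: "\<And>n. feasible (Qn n)" "\<And>n. obj \<gamma> (Qn n) = V \<gamma>"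
    and dominated: "\<And>n i. v n $ i \<le> promise (Qn n) $ i"
    by metis
  have "(\<lambda>n. obj \<gamma> (Qn n)) \<longlonglongrightarrow> V \<gamma>"
    using Qn(2) by simp
  then obtain r Q where r: "strict_mono r" and Q: "feasible Q" "obj \<gamma> Q = V \<gamma>"
    and promise: "(\<lambda>k. promise (Qn (r k))) \<longlonglongrightarrow> promise Q"
    using optimal_limit[where Pk=Qn, OF Qn(1)] by blast
  have "(\<lambda>k. v (r k)) \<longlonglongrightarrow> w"
    using LIMSEQ_subseq_LIMSEQ[OF v r] by (simp add: comp_def)
  then have "w $ i \<le> promise Q $ i" for i
    using dominated by (intro LIMSEQ_le[OF tendsto_vec_nth tendsto_vec_nth[OF promise]]) auto
  then show "w \<in> optimal_promises \<gamma>"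
    using Q unfolding optimal_promises_def by blast
qed

text \<open>Near-optimal lotteries for the multiplier \<open>\<gamma> + t l\<close> are near-optimal for \<open>\<gamma>\<close> and,
  by the subgradient inequality, have promised value in direction \<open>l\<close> almost \<open>\<phi>D \<bullet> l\<close>.\<close>

lemma near_optimal_in_direction:
  assumes "\<phi>D \<in> subdifferential (\<lambda>\<gamma>'. V \<gamma>') \<gamma>" "0 < t" "t \<le> 1"
    and K: "\<And>P. P \<in> lotteries \<Longrightarrow> \<bar>promise P \<bullet> l\<bar> \<le> K"
  shows "\<exists>P. feasible P \<and> \<phi>D \<bullet> l - t \<le> promise P \<bullet> l \<and> V \<gamma> - t * (\<bar>\<phi>D \<bullet> l\<bar> + K + 1) \<le> obj \<gamma> P"
proof -
  obtain P where P: "feasible P" and near: "V (\<gamma> + t *\<^sub>R l) - t * t < obj (\<gamma> + t *\<^sub>R l) P"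
    using V_approx[of "t * t" "\<gamma> + t *\<^sub>R l"] assms(2) by auto
  have "obj (\<gamma> + t *\<^sub>R l) P = obj \<gamma> P + t * (promise P \<bullet> l)"
    unfolding objective_eq[OF feasible_lottery[OF P]] by (simp add: inner_add_left inner_commute)
  moreover have "V \<gamma> + t * (\<phi>D \<bullet> l) \<le> V (\<gamma> + t *\<^sub>R l)"
    using assms(1) unfolding subdifferential_def by (auto dest: spec[of _ "\<gamma> + t *\<^sub>R l"])
  ultimately have main: "V \<gamma> + t * (\<phi>D \<bullet> l) - t * t < obj \<gamma> P + t * (promise P \<bullet> l)"
    using near by linarith
  have "t * (promise P \<bullet> l - (\<phi>D \<bullet> l - t)) > 0"
    using main objective_le_V[OF P, of \<gamma>] by (simp add: algebra_simps)
  then have "\<phi>D \<bullet> l - t \<le> promise P \<bullet> l"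
    using assms(2) by (simp add: zero_less_mult_iff)
  moreover have "t * (promise P \<bullet> l - \<phi>D \<bullet> l + t) \<le> t * (\<bar>\<phi>D \<bullet> l\<bar> + K + 1)"
    using K[OF feasible_lottery[OF P]] assms(2,3) by (intro mult_left_mono) auto
  then have "V \<gamma> - t * (\<bar>\<phi>D \<bullet> l\<bar> + K + 1) \<le> obj \<gamma> P"
    using main by (simp add: distrib_left right_diff_distrib)
  ultimately show ?thesis
    using P by blast
qed

lemma subgradient_in_optimal_promises:
  assumes "\<phi>D \<in> subdifferential (\<lambda>\<gamma>'. V \<gamma>') \<gamma>"
  shows "\<phi>D \<in> optimal_promises \<gamma>"
proof (rule ccontr)
  assume "\<phi>D \<notin> optimal_promises \<gamma>"
  from separating_hyperplane_closed_point[OF convex_optimal_promises closed_optimal_promises this]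
  obtain a b where ab: "a \<bullet> \<phi>D < b" "\<forall>v\<in>optimal_promises \<gamma>. b < a \<bullet> v"
    by blast
  define l where "l = - a"
  obtain B where B: "\<forall>P\<in>lotteries. \<bar>reward P\<bar> \<le> B \<and> norm (promise P) \<le> B"
    using reward_promise_bounded by blast
  have K: "\<bar>promise P \<bullet> l\<bar> \<le> B * norm l" if "P \<in> lotteries" for P
    using Cauchy_Schwarz_ineq2[of "promise P" l] B that by (meson mult_right_mono norm_ge_zero order_trans)
  define C where "C = \<bar>\<phi>D \<bullet> l\<bar> + B * norm l + 1"
  have "\<exists>P. feasible P \<and> \<phi>D \<bullet> l - 1 / real (Suc k) \<le> promise P \<bullet> l
          \<and> V \<gamma> - C / real (Suc k) \<le> obj \<gamma> P" for k
    using near_optimal_in_direction[OF assms, of "1 / real (Suc k)" l "B * norm l"] K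
    by (simp add: C_def)
  then obtain Pk where Pk: "\<And>k. feasible (Pk k)" "\<And>k. \<phi>D \<bullet> l - 1 / real (Suc k) \<le> promise (Pk k) \<bullet> l"
    "\<And>k. V \<gamma> - C / real (Suc k) \<le> obj \<gamma> (Pk k)"
    by metis
  have "(\<lambda>k. obj \<gamma> (Pk k)) \<longlonglongrightarrow> V \<gamma>"
    using Pk(3) objective_le_V[OF Pk(1)] by (rule LIMSEQ_squeeze_inverse_Suc)
  then obtain r Q where r: "strict_mono r" and Q: "feasible Q" "obj \<gamma> Q = V \<gamma>"
    and promise: "(\<lambda>k. promise (Pk (r k))) \<longlonglongrightarrow> promise Q"
    using optimal_limit[where Pk=Pk, OF Pk(1)] by blast
  have "(\<lambda>k. \<phi>D \<bullet> l - 1 / real (Suc (r k))) \<longlonglongrightarrow> \<phi>D \<bullet> l"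
    using LIMSEQ_subseq_LIMSEQ[OF LIMSEQ_squeeze_inverse_Suc[of "\<phi>D \<bullet> l" 1 "\<lambda>k. \<phi>D \<bullet> l - 1 / real (Suc k)"] r]
    by (simp add: comp_def)
  then have "\<phi>D \<bullet> l \<le> promise Q \<bullet> l"
    using Pk(2) by (intro LIMSEQ_le[OF _ tendsto_inner[OF promise tendsto_const]]) auto
  moreover have "b < a \<bullet> promise Q"
    using ab(2) Q unfolding optimal_promises_def by blast
  ultimately show False
    using ab(1) by (simp add: l_def inner_commute)
qed

lemma Wval_eq_V_iff:
  "Wval \<beta> \<pi> \<zeta> p A r g gbar \<gamma> x0 s0 \<phi> = ereal (V \<gamma>)
     \<longleftrightarrow> (\<exists>\<phi>D \<in> subdifferential (\<lambda>\<gamma>'. V \<gamma>') \<gamma>. \<forall>i. \<phi> $ i \<le> \<phi>D $ i)"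
proof
  assume "Wval \<beta> \<pi> \<zeta> p A r g gbar \<gamma> x0 s0 \<phi> = ereal (V \<gamma>)"
  then show "\<exists>\<phi>D \<in> subdifferential (\<lambda>\<gamma>'. V \<gamma>') \<gamma>. \<forall>i. \<phi> $ i \<le> \<phi>D $ i"
    unfolding Wval_eq_Sup_constrained by (rule Sup_constrained_eq_V_imp_dominating_subgradient)
next
  assume "\<exists>\<phi>D \<in> subdifferential (\<lambda>\<gamma>'. V \<gamma>') \<gamma>. \<forall>i. \<phi> $ i \<le> \<phi>D $ i"
  then obtain \<phi>D where \<phi>D: "\<phi>D \<in> subdifferential (\<lambda>\<gamma>'. V \<gamma>') \<gamma>" "\<forall>i. \<phi> $ i \<le> \<phi>D $ i"
    by blast
  obtain Q where Q: "feasible Q" "obj \<gamma> Q = V \<gamma>" and "\<forall>i. \<phi>D $ i \<le> promise Q $ i"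
    using subgradient_in_optimal_promises[OF \<phi>D(1)] unfolding optimal_promises_def by blast
  with \<phi>D(2) have "\<forall>i. \<phi> $ i \<le> promise Q $ i"
    using order.trans by blast
  show "Wval \<beta> \<pi> \<zeta> p A r g gbar \<gamma> x0 s0 \<phi> = ereal (V \<gamma>)"
    unfolding Wval_eq_Sup_constrained
  proof (rule antisym)
    show "Sup ((\<lambda>P. ereal (obj \<gamma> P)) ` {P. feasible P \<and> (\<forall>i. \<phi> $ i \<le> promise P $ i)}) \<le> ereal (V \<gamma>)"
      by (rule Sup_least) (auto intro: objective_le_V)
    have "ereal (obj \<gamma> Q) \<in> (\<lambda>P. ereal (obj \<gamma> P)) ` {P. feasible P \<and> (\<forall>i. \<phi> $ i \<le> promise P $ i)}"
      using Q(1) \<open>\<forall>i. \<phi> $ i \<le> promise Q $ i\<close> by blast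
    from Sup_upper[OF this]
    show "ereal (V \<gamma>) \<le> Sup ((\<lambda>P. ereal (obj \<gamma> P)) ` {P. feasible P \<and> (\<forall>i. \<phi> $ i \<le> promise P $ i)})"
      by (simp add: Q(2))
  qed
qed

end

theorem corollary5p3:
  fixes \<pi> :: "'s::finite \<Rightarrow> 's \<Rightarrow> real"
    and A :: "(real^'n) set" and X :: "(real^'m) set"
    and \<zeta> :: "real^'m \<Rightarrow> real^'n \<Rightarrow> 's \<Rightarrow> real^'m"
    and p r :: "real^'m \<Rightarrow> real^'n \<Rightarrow> 's \<Rightarrow> real"
    and g :: "'i::finite \<Rightarrow> real^'m \<Rightarrow> real^'n \<Rightarrow> 's \<Rightarrow> real"
    and gbar :: "'i \<Rightarrow> real" and \<beta> :: real
    and \<gamma> \<phi> :: "real^'i" and x :: "real^'m" and s :: 's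
  assumes pi_pos: "\<And>s s'. \<pi> s s' > 0"
    and pi_sum: "\<And>s. (\<Sum>s'\<in>UNIV. \<pi> s s') = 1"
    and A_fin: "finite A"
    and X_cnt: "countable X"
    and zeta_X: "\<And>y a s. y \<in> X \<Longrightarrow> a \<in> A \<Longrightarrow> \<zeta> y a s \<in> X"
    and r_bdd: "\<exists>B. \<forall>y\<in>X. \<forall>a\<in>A. \<forall>s. \<bar>r y a s\<bar> \<le> B"
    and g_bdd: "\<And>i. \<exists>B. \<forall>y\<in>X. \<forall>a\<in>A. \<forall>s. \<bar>g i y a s\<bar> \<le> B"
    and beta: "0 < \<beta>" "\<beta> < 1"
    and standing: "\<And>x0 s0. x0 \<in> X \<Longrightarrow> \<exists>a. det_feasible \<beta> \<pi> \<zeta> p A g gbar x0 s0 a"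
    and gamma_nonneg: "\<And>i. \<gamma> $ i \<ge> 0"
    and x_X: "x \<in> X"
  shows "Wval \<beta> \<pi> \<zeta> p A r g gbar \<gamma> x s \<phi> = ereal (Vval \<beta> \<pi> \<zeta> p A r g gbar \<gamma> x s)
     \<longleftrightarrow> (\<exists>\<phi>D \<in> subdifferential (\<lambda>\<gamma>'. Vval \<beta> \<pi> \<zeta> p A r g gbar \<gamma>' x s) \<gamma>. \<forall>i. \<phi> $ i \<le> \<phi>D $ i)"
proof -
  interpret discounted_lottery_space \<zeta> p A x \<beta> \<pi> X
    using pi_pos pi_sum A_fin zeta_X beta x_X by unfold_locales (auto simp: less_imp_le)
  interpret lottery_problem \<zeta> p A x \<beta> \<pi> X r g gbar s
    using r_bdd g_bdd standing[OF x_X] by unfold_locales (auto simp: bounded_payoff_def)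
  show ?thesis
    by (rule Wval_eq_V_iff)
qed

end
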